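(* Let $\mathbb{L}$ be a complex $4$-dimensional nilpotent mono Leibniz algebra. Then $\mathbb{L}$ is a binary Leibniz algebra, or $\mathbb{L}$ is isomorphic to one of the following algebras, each given on a basis $e_1,\dots,e_4$ (all products of basis elements not listed are zero; $\alpha\in\mathbb{C}$ unless restricted): \begin{itemize} \item $\mathbb{M}_{01}$: $e_1e_1=e_2,\ e_2e_3=e_4$; \item $\mathbb{M}_{02}$: $e_1e_1=e_2,\ e_2e_3=e_4,\ e_3e_1=e_4$; \item $\mathbb{M}_{03}^{\alpha}$: $e_1e_2=e_3,\ e_1e_3=\alpha e_4,\ e_2e_1=-e_3,\ e_3e_1=(1-\alpha)e_4$; \item $\mathbb{M}_{04}^{\alpha}$: $e_1e_2=e_3,\ e_1e_3=\alpha e_4,\ e_2e_1=-e_3,\ e_2e_2=e_4,\ e_3e_1=(1-\alpha)e_4$; \item $\mathbb{M}_{05}$: $e_1e_2=e_3,\ e_2e_1=-e_3,\ e_2e_3=e_4,\ e_3e_1=e_4,\ e_3e_2=-e_4$; \item $\mathbb{M}_{06}$: $e_1e_2=e_3,\ e_2e_1=-e_3,\ e_2e_2=e_4,\ e_2e_3=e_4,\ e_3e_1=e_4,\ e_3e_2=-e_4$; \item $\mathbb{M}_{07}$: $e_1e_2=e_3,\ e_2e_1=-e_3,\ e_3e_3=e_4$; \item $\mathbb{M}_{08}$: $e_1e_2=e_3+e_4,\ e_2e_1=-e_3,\ e_3e_3=e_4$; \item $\mathbb{M}_{09}$: $e_1e_1=e_4,\ e_1e_2=e_3,\ e_2e_1=-e_3,\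 e_3e_3=e_4$; \item $\mathbb{M}_{10}^{\alpha}$: $e_1e_1=\alpha e_4,\ e_1e_2=e_3,\ e_1e_3=e_4,\ e_2e_1=-e_3,\ e_3e_1=-e_4,\ e_3e_3=e_4$; \item $\mathbb{M}_{11}$: $e_1e_2=e_3+e_4,\ e_1e_3=e_4,\ e_2e_1=-e_3,\ e_3e_1=-e_4,\ e_3e_3=e_4$; \item $\mathbb{M}_{12}^{\alpha}$: $e_1e_1=\alpha e_4,\ e_1e_2=e_3,\ e_1e_3=e_4,\ e_2e_1=-e_3,\ e_2e_2=e_4,\ e_3e_1=-e_4,\ e_3e_3=e_4$; \item $\mathbb{M}_{13}^{\alpha}$: $e_1e_1=e_3,\ e_1e_2=e_3,\ e_2e_2=\alpha e_3,\ e_3e_2=e_4$; \item $\mathbb{M}_{14}^{\alpha}$: $e_1e_1=e_3,\ e_1e_2=e_3,\ e_2e_1=e_4,\ e_2e_2=\alpha e_3,\ e_3e_2=e_4$; \item $\mathbb{M}_{15}^{\alpha}$: $e_1e_1=e_3,\ e_1e_2=e_3,\ e_2e_2=\alpha e_3,\ e_3e_1=e_4,\ e_3e_2=\tfrac12(1-\sqrt{1-4\alpha})e_4$; \item $\mathbb{M}_{16}^{\alpha}$: $e_1e_1=e_3,\ e_1e_2=e_3,\ e_2e_2=\alpha e_3+e_4,\ e_3e_1=e_4,\ e_3e_2=\tfrac12(1-\sqrt{1-4\alpha})e_4$; \item $\mathbb{M}_{17}^{\alpha}$, $\alpha\neq0$: $e_1e_1=e_3,\ e_1e_2=e_3,\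 e_2e_2=\alpha e_3,\ e_3e_1=e_4,\ e_3e_2=\tfrac12(1+\sqrt{1-4\alpha})e_4$; \item $\mathbb{M}_{18}^{\alpha}$, $\alpha\neq0$: $e_1e_1=e_3,\ e_1e_2=e_3,\ e_2e_2=\alpha e_3+e_4,\ e_3e_1=e_4,\ e_3e_2=\tfrac12(1+\sqrt{1-4\alpha})e_4$; \item $\mathbb{M}_{19}$: $e_1e_1=e_3,\ e_2e_2=e_3,\ e_3e_1=e_4$; \item $\mathbb{M}_{20}$: $e_1e_1=e_3,\ e_1e_2=e_4,\ e_2e_2=e_3,\ e_3e_1=e_4$; \item $\mathbb{M}_{21}$: $e_1e_1=e_3,\ e_2e_2=e_3,\ e_3e_1=e_4,\ e_3e_2=ie_4$; \item $\mathbb{M}_{22}$: $e_1e_1=e_3,\ e_1e_2=e_4,\ e_2e_2=e_3,\ e_3e_1=e_4,\ e_3e_2=ie_4$. \end{itemize}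
   Context: All algebras are over $\mathbb{C}$ and not necessarily associative; $i=\sqrt{-1}$ and $\sqrt{1-4\alpha}$ denotes a fixed square root of $1-4\alpha$. An algebra is a Leibniz algebra if it satisfies $(xy)z=(xz)y+x(yz)$ for all $x,y,z$. An algebra is a binary Leibniz algebra if every subalgebra generated by two elements is a Leibniz algebra, and a mono Leibniz algebra if every subalgebra generated by one element is a Leibniz algebra. An algebra $A$ is nilpotent if there is $n$ such that every product of $n$ elements of $A$, with any arrangement of brackets, is zero. *)

theory Defs
  imports "HOL-Analysis.Analysis"
begin

text \<open>A 4-dimensional complex algebra is modelled, after choosing a basis, as the
complex vector space complex^4 with a complex-bilinear multiplication.\<close>

type_synonym vec4 = "complex ^ 4"
type_synonym alg4 = "vec4 \<Rightarrow> vec4 \<Rightarrow> vec4"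

definition clin :: "(vec4 \<Rightarrow> vec4) \<Rightarrow> bool" where
  "clin f \<longleftrightarrow> Vector_Spaces.linear ((*s)) ((*s)) f"

definition cbilinear :: "alg4 \<Rightarrow> bool" where
  "cbilinear m \<longleftrightarrow> (\<forall>y. clin (\<lambda>x. m x y)) \<and> (\<forall>x. clin (\<lambda>y. m x y))"

definition gen_subalg :: "alg4 \<Rightarrow> vec4 set \<Rightarrow> vec4 set" where
  "gen_subalg m S = \<Inter>{B. S \<subseteq> B \<and> module.subspace ((*s)) B \<and> (\<forall>x\<in>B. \<forall>y\<in>B. m x y \<in> B)}"

definition leibniz_on :: "alg4 \<Rightarrow> vec4 set \<Rightarrow> bool" where
  "leibniz_on m B \<longleftrightarrow> (\<forall>x\<in>B. \<forall>y\<in>B. \<forall>z\<in>B. m (m x y) z = m (m x z) y + m x (m y z))"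

definition mono_leibniz :: "alg4 \<Rightarrow> bool" where
  "mono_leibniz m \<longleftrightarrow> (\<forall>x. leibniz_on m (gen_subalg m {x}))"

definition binary_leibniz :: "alg4 \<Rightarrow> bool" where
  "binary_leibniz m \<longleftrightarrow> (\<forall>x y. leibniz_on m (gen_subalg m {x, y}))"

inductive is_prod :: "alg4 \<Rightarrow> nat \<Rightarrow> vec4 \<Rightarrow> bool" for m where
  single: "is_prod m 1 x"
| mult: "is_prod m i a \<Longrightarrow> is_prod m j b \<Longrightarrow> is_prod m (i + j) (m a b)"

definition nilpotent_alg :: "alg4 \<Rightarrow> bool" where
  "nilpotent_alg m \<longleftrightarrow> (\<exists>n>0. \<forall>p. is_prod m n p \<longrightarrow> p = 0)"

definition isomorphic_alg :: "alg4 \<Rightarrow> alg4 \<Rightarrow> bool" where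
  "isomorphic_alg m1 m2 \<longleftrightarrow> (\<exists>f. clin f \<and> bij f \<and> (\<forall>x y. f (m1 x y) = m2 (f x) (f y)))"

text \<open>Standard basis e_1,...,e_4 (indices 1..4 mapped injectively into the index type 4).\<close>
definition e :: "nat \<Rightarrow> vec4" where
  "e k = axis (of_nat k :: 4) 1"

definition tbl :: "(nat \<Rightarrow> nat \<Rightarrow> vec4) \<Rightarrow> alg4" where
  "tbl t x y = (\<Sum>i\<in>{1..4}. \<Sum>j\<in>{1..4}. (x $ of_nat i * y $ of_nat j) *s t i j)"

definition M01 :: alg4 where "M01 = tbl (\<lambda>i j.
  if (i,j) = (1,1) then e 2 else if (i,j) = (2,3) then e 4 else 0)"
definition M02 :: alg4 where "M02 = tbl (\<lambda>i j.
  if (i,j) = (1,1) then e 2 else if (i,j) = (2,3) then e 4 else if (i,j) = (3,1) then e 4 else 0)"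
definition M03 :: "complex \<Rightarrow> alg4" where "M03 \<alpha> = tbl (\<lambda>i j.
  if (i,j) = (1,2) then e 3 else if (i,j) = (1,3) then \<alpha> *s e 4
  else if (i,j) = (2,1) then - e 3 else if (i,j) = (3,1) then (1 - \<alpha>) *s e 4 else 0)"
definition M04 :: "complex \<Rightarrow> alg4" where "M04 \<alpha> = tbl (\<lambda>i j.
  if (i,j) = (1,2) then e 3 else if (i,j) = (1,3) then \<alpha> *s e 4
  else if (i,j) = (2,1) then - e 3 else if (i,j) = (2,2) then e 4
  else if (i,j) = (3,1) then (1 - \<alpha>) *s e 4 else 0)"
definition M05 :: alg4 where "M05 = tbl (\<lambda>i j.
  if (i,j) = (1,2) then e 3 else if (i,j) = (2,1) then - e 3 else if (i,j) = (2,3) then e 4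
  else if (i,j) = (3,1) then e 4 else if (i,j) = (3,2) then - e 4 else 0)"
definition M06 :: alg4 where "M06 = tbl (\<lambda>i j.
  if (i,j) = (1,2) then e 3 else if (i,j) = (2,1) then - e 3 else if (i,j) = (2,2) then e 4
  else if (i,j) = (2,3) then e 4
  else if (i,j) = (3,1) then e 4 else if (i,j) = (3,2) then - e 4 else 0)"
definition M07 :: alg4 where "M07 = tbl (\<lambda>i j.
  if (i,j) = (1,2) then e 3 else if (i,j) = (2,1) then - e 3 else if (i,j) = (3,3) then e 4 else 0)"
definition M08 :: alg4 where "M08 = tbl (\<lambda>i j.
  if (i,j) = (1,2) then e 3 + e 4 else if (i,j) = (2,1) then - e 3
  else if (i,j) = (3,3) then e 4 else 0)"
definition M09 :: alg4 where "M09 = tbl (\<lambda>i j.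
  if (i,j) = (1,1) then e 4 else if (i,j) = (1,2) then e 3 else if (i,j) = (2,1) then - e 3
  else if (i,j) = (3,3) then e 4 else 0)"
definition M10 :: "complex \<Rightarrow> alg4" where "M10 \<alpha> = tbl (\<lambda>i j.
  if (i,j) = (1,1) then \<alpha> *s e 4 else if (i,j) = (1,2) then e 3 else if (i,j) = (1,3) then e 4
  else if (i,j) = (2,1) then - e 3 else if (i,j) = (3,1) then - e 4
  else if (i,j) = (3,3) then e 4 else 0)"
definition M11 :: alg4 where "M11 = tbl (\<lambda>i j.
  if (i,j) = (1,2) then e 3 + e 4 else if (i,j) = (1,3) then e 4
  else if (i,j) = (2,1) then - e 3 else if (i,j) = (3,1) then - e 4
  else if (i,j) = (3,3) then e 4 else 0)"
definition M12 :: "complex \<Rightarrow> alg4" where "M12 \<alpha> = tbl (\<lambda>i j.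
  if (i,j) = (1,1) then \<alpha> *s e 4 else if (i,j) = (1,2) then e 3 else if (i,j) = (1,3) then e 4
  else if (i,j) = (2,1) then - e 3 else if (i,j) = (2,2) then e 4
  else if (i,j) = (3,1) then - e 4 else if (i,j) = (3,3) then e 4 else 0)"
definition M13 :: "complex \<Rightarrow> alg4" where "M13 \<alpha> = tbl (\<lambda>i j.
  if (i,j) = (1,1) then e 3 else if (i,j) = (1,2) then e 3 else if (i,j) = (2,2) then \<alpha> *s e 3
  else if (i,j) = (3,2) then e 4 else 0)"
definition M14 :: "complex \<Rightarrow> alg4" where "M14 \<alpha> = tbl (\<lambda>i j.
  if (i,j) = (1,1) then e 3 else if (i,j) = (1,2) then e 3 else if (i,j) = (2,1) then e 4
  else if (i,j) = (2,2) then \<alpha> *s e 3 else if (i,j) = (3,2) then e 4 else 0)"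
definition M15 :: "complex \<Rightarrow> alg4" where "M15 \<alpha> = tbl (\<lambda>i j.
  if (i,j) = (1,1) then e 3 else if (i,j) = (1,2) then e 3 else if (i,j) = (2,2) then \<alpha> *s e 3
  else if (i,j) = (3,1) then e 4
  else if (i,j) = (3,2) then ((1 - csqrt (1 - 4 * \<alpha>)) / 2) *s e 4 else 0)"
definition M16 :: "complex \<Rightarrow> alg4" where "M16 \<alpha> = tbl (\<lambda>i j.
  if (i,j) = (1,1) then e 3 else if (i,j) = (1,2) then e 3 else if (i,j) = (2,2) then \<alpha> *s e 3 + e 4
  else if (i,j) = (3,1) then e 4
  else if (i,j) = (3,2) then ((1 - csqrt (1 - 4 * \<alpha>)) / 2) *s e 4 else 0)"
definition M17 :: "complex \<Rightarrow> alg4" where "M17 \<alpha> = tbl (\<lambda>i j.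
  if (i,j) = (1,1) then e 3 else if (i,j) = (1,2) then e 3 else if (i,j) = (2,2) then \<alpha> *s e 3
  else if (i,j) = (3,1) then e 4
  else if (i,j) = (3,2) then ((1 + csqrt (1 - 4 * \<alpha>)) / 2) *s e 4 else 0)"
definition M18 :: "complex \<Rightarrow> alg4" where "M18 \<alpha> = tbl (\<lambda>i j.
  if (i,j) = (1,1) then e 3 else if (i,j) = (1,2) then e 3 else if (i,j) = (2,2) then \<alpha> *s e 3 + e 4
  else if (i,j) = (3,1) then e 4
  else if (i,j) = (3,2) then ((1 + csqrt (1 - 4 * \<alpha>)) / 2) *s e 4 else 0)"
definition M19 :: alg4 where "M19 = tbl (\<lambda>i j.
  if (i,j) = (1,1) then e 3 else if (i,j) = (2,2) then e 3 else if (i,j) = (3,1) then e 4 else 0)"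
definition M20 :: alg4 where "M20 = tbl (\<lambda>i j.
  if (i,j) = (1,1) then e 3 else if (i,j) = (1,2) then e 4 else if (i,j) = (2,2) then e 3
  else if (i,j) = (3,1) then e 4 else 0)"
definition M21 :: alg4 where "M21 = tbl (\<lambda>i j.
  if (i,j) = (1,1) then e 3 else if (i,j) = (2,2) then e 3 else if (i,j) = (3,1) then e 4
  else if (i,j) = (3,2) then \<i> *s e 4 else 0)"
definition M22 :: alg4 where "M22 = tbl (\<lambda>i j.
  if (i,j) = (1,1) then e 3 else if (i,j) = (1,2) then e 4 else if (i,j) = (2,2) then e 3
  else if (i,j) = (3,1) then e 4 else if (i,j) = (3,2) then \<i> *s e 4 else 0)"

end

theory Submission
  imports Defs
begin

text \<open>
Let D = L^2 be the span of all products and W = L D + D L. If L is not Leibniz, then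
W \<noteq> 0, because otherwise every product of three elements vanishes. Nilpotency makes the
chain D \<supset> W \<supset> L W + W L strict. If dim D \<ge> 3, some x with x + D spanning L exists,
and such an x generates the nilpotent algebra L, so L would be Leibniz by mono-Leibnizness.
Hence dim D = 2, dim W = 1, and W annihilates L. In a basis e1, e2, e3, e4 with
D = span {e3, e4} and W = span {e4} the multiplication is determined by 13 structure
constants. The identity x(xx) = 0 of mono Leibniz algebras kills the products
e_i e3 and e3 e3 unless the e3-component of the product on span {e1, e2} is
alternating. A case analysis over changes of basis adapted to the flag D \<supset> W then brings
the structure constants into one of the listed normal forms.
\<close>

section \<open>Linear algebra in complex^4\<close>

definition v4 :: "complex \<Rightarrow> complex \<Rightarrow> complex \<Rightarrow> complex \<Rightarrow> vec4" where
  "v4 a b c d = (\<chi> i. if i = 1 then a else if i = 2 then b else if i = 3 then c else d)"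

lemma v4_nth [simp]:
  "v4 a b c d $ 1 = a" "v4 a b c d $ 2 = b" "v4 a b c d $ 3 = c" "v4 a b c d $ 4 = d"
  by (simp_all add: v4_def)

lemma vec4_eq_iff: "(x::vec4) = y \<longleftrightarrow> x$1 = y$1 \<and> x$2 = y$2 \<and> x$3 = y$3 \<and> x$4 = y$4"
  by (auto simp: vec_eq_iff forall_4)

lemma v4_add [simp]: "v4 a b c d + v4 a' b' c' d' = v4 (a+a') (b+b') (c+c') (d+d')"
  by (simp add: vec4_eq_iff)

lemma v4_scale [simp]: "k *s v4 a b c d = v4 (k*a) (k*b) (k*c) (k*d)"
  by (simp add: vec4_eq_iff)

lemma v4_uminus [simp]: "- v4 a b c d = v4 (-a) (-b) (-c) (-d)"
  by (simp add: vec4_eq_iff)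

lemma zero_vec4_eq_v4: "(0::vec4) = v4 0 0 0 0"
  by (simp add: vec4_eq_iff)

lemma vec4_eq_sum_coordinates:
  "(a::vec4) = a$1 *s v4 1 0 0 0 + a$2 *s v4 0 1 0 0 + a$3 *s v4 0 0 1 0 + a$4 *s v4 0 0 0 1"
  by (simp add: vec4_eq_iff)

lemma e_eq_v4: "e 1 = v4 1 0 0 0" "e 2 = v4 0 1 0 0" "e 3 = v4 0 0 1 0" "e 4 = v4 0 0 0 1"
  by (simp_all add: e_def v4_def vec_eq_iff axis_def forall_4)

lemma sum_1_to_4: "(\<Sum>i\<in>{1..4::nat}. f i) = f 1 + f 2 + f 3 + f 4"
  by (simp add: numeral_eq_Suc atLeastAtMostSuc_conv ac_simps)

lemma clin_iff: "clin f \<longleftrightarrow> (\<forall>x y. f (x+y) = f x + f y) \<and> (\<forall>c x. f (c *s x) = c *s f x)"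
  unfolding clin_def by (subst Vector_Spaces.linear_iff) (simp add: vec.vector_space_axioms)

lemma clinD: assumes "clin f" shows "f (x+y) = f x + f y" "f (c *s x) = c *s f x"
  using assms by (auto simp: clin_iff)

lemma clin_zero: "clin f \<Longrightarrow> f 0 = 0"
  using clinD(2)[of f 0 0] by simp

lemma cbilinearD:
  assumes "cbilinear L"
  shows "L (x+y) z = L x z + L y z" "L x (y+z) = L x y + L x z"
    "L (c *s x) y = c *s L x y" "L x (c *s y) = c *s L x y" "L 0 y = 0" "L x 0 = 0"
    "clin (\<lambda>x. L x y)" "clin (L x)"
proof -
  have left: "clin (\<lambda>x. L x y)" for y using assms unfolding cbilinear_def by blast
  have right: "clin (L x)" for x using assms unfolding cbilinear_def by (simp add: eta_contract_eq)
  show "L (x+y) z = L x z + L y z" "L (c *s x) y = c *s L x y" "L 0 y = 0"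
    using clinD[OF left] clin_zero[OF left] by blast+
  show "L x (y+z) = L x y + L x z" "L x (c *s y) = c *s L x y" "L x 0 = 0"
    using clinD[OF right] clin_zero[OF right] by blast+
  show "clin (\<lambda>x. L x y)" "clin (L x)" by (fact left right)+
qed

lemma cbilinear_eqI_on_basis:
  fixes F G :: alg4
  assumes "cbilinear F" "cbilinear G"
    and "\<And>x y. x \<in> {v4 1 0 0 0, v4 0 1 0 0, v4 0 0 1 0, v4 0 0 0 1} \<Longrightarrow>
       y \<in> {v4 1 0 0 0, v4 0 1 0 0, v4 0 0 1 0, v4 0 0 0 1} \<Longrightarrow> F x y = G x y"
  shows "F a b = G a b"
proof -
  note F = cbilinearD(1-4)[OF assms(1)] and G = cbilinearD(1-4)[OF assms(2)]
  have basis: "F (v4 i1 i2 i3 i4) (v4 j1 j2 j3 j4) = G (v4 i1 i2 i3 i4) (v4 j1 j2 j3 j4)"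
    if "v4 i1 i2 i3 i4 \<in> {v4 1 0 0 0, v4 0 1 0 0, v4 0 0 1 0, v4 0 0 0 1}"
       "v4 j1 j2 j3 j4 \<in> {v4 1 0 0 0, v4 0 1 0 0, v4 0 0 1 0, v4 0 0 0 1}" for i1 i2 i3 i4 j1 j2 j3 j4
    using assms(3) that by blast
  show ?thesis
    by (subst (1 2) vec4_eq_sum_coordinates[of a], subst (1 2) vec4_eq_sum_coordinates[of b])
      (simp only: F G basis insert_iff singleton_iff simp_thms)
qed

lemma clin_bij_coordinate_map:
  fixes u1 u2 u3 u4 :: vec4
  assumes "vec.span {u1, u2, u3, u4} = UNIV" "distinct [u1, u2, u3, u4]"
  shows "clin (\<lambda>a::vec4. a$1 *s u1 + a$2 *s u2 + a$3 *s u3 + a$4 *s u4)" (is "clin ?T")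
    and "bij (\<lambda>a::vec4. a$1 *s u1 + a$2 *s u2 + a$3 *s u3 + a$4 *s u4)"
proof -
  show lin: "clin ?T" by (simp add: clin_iff algebra_simps)
  have "z \<in> range ?T" for z
  proof -
    obtain c where "z = (\<Sum>u\<in>{u1, u2, u3, u4}. c u *s u)"
      using assms(1) vec.span_finite[of "{u1, u2, u3, u4}"] by auto
    then have "z = ?T (v4 (c u1) (c u2) (c u3) (c u4))" using assms(2) by simp
    then show ?thesis by blast
  qed
  then have "surj ?T" by blast
  moreover have "inj ?T" using vec.linear_surj_imp_inj lin \<open>surj ?T\<close> unfolding clin_def by blast
  ultimately show "bij ?T" by (simp add: bij_def)
qed

lemma span_insert_eq_UNIV_if_dim_ge_3:
  assumes "vec.dim (S :: vec4 set) \<ge> 3"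
  obtains x where "vec.span (insert x S) = UNIV"
proof -
  have full: "vec.span T = UNIV \<longleftrightarrow> vec.dim T = 4" for T :: "vec4 set"
    using vec.dim_eq_full[of T] by (simp add: vec.dimension_def card_cart_basis)
  have "vec.dim S \<le> 4" using vec.dim_subset[OF subset_UNIV, of S] by (simp add: card_cart_basis)
  show ?thesis
  proof (cases "vec.dim S = 4")
    case True
    then show ?thesis using that[of 0] full by (simp add: vec.span_insert_0)
  next
    case False
    then obtain x where "x \<notin> vec.span S" using full by blast
    then have "vec.dim (insert x S) = 4"
      using vec.dim_insert[of x S] False assms \<open>vec.dim S \<le> 4\<close> by simp
    then show ?thesis using that full by blast
  qed
qed

lemma dim_eq_1_obtains_span_singleton:
  assumes "vec.dim S = 1" obtains w where "w \<noteq> 0" "vec.span S = vec.span {w}"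
proof -
  obtain B where B: "B \<subseteq> S" "vec.independent B" "S \<subseteq> vec.span B" "card B = vec.dim S"
    using vec.basis_exists by blast
  then obtain w where w: "B = {w}" using assms card_1_singletonE by metis
  have "w \<noteq> 0" using B(2) w vec.dependent_zero by blast
  moreover have "vec.span S = vec.span {w}"
  proof
    show "vec.span S \<subseteq> vec.span {w}" using B(3) w by (intro vec.span_minimal) simp_all
    show "vec.span {w} \<subseteq> vec.span S" using B(1) w by (intro vec.span_mono) simp
  qed
  ultimately show ?thesis using that by blast
qed

lemma extend_pair_to_basis:
  assumes "vec.independent {u, w :: vec4}" "u \<noteq> w"
  obtains v1 v2 where "vec.span {v1, v2, u, w} = UNIV" "distinct [v1, v2, u, w]"
proof -
  obtain B where B: "{u, w} \<subseteq> B" "vec.independent B" "UNIV \<subseteq> vec.span B"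
    using vec.maximal_independent_subset_extend[OF subset_UNIV assms(1)] by metis
  have "vec.span B = UNIV" using B(3) by auto
  then have "card B = 4"
    using vec.dim_span_eq_card_independent[OF B(2)] by (simp add: card_cart_basis)
  moreover have "finite B" using B(2) vec.finiteI_independent by blast
  ultimately have "card (B - {u, w}) = 2" using B(1) assms(2) by (simp add: card_Diff_subset)
  then obtain v1 v2 where v12: "B - {u, w} = {v1, v2}" "v1 \<noteq> v2" by (meson card_2_iff)
  have "B = {v1, v2, u, w}" using v12(1) B(1) by blast
  moreover have "v1 \<notin> {u, w}" "v2 \<notin> {u, w}" using v12(1) by blast+
  then have "distinct [v1, v2, u, w]" using v12(2) assms(2) by simp
  ultimately show ?thesis using that \<open>vec.span B = UNIV\<close> by blast
qed

section \<open>Isomorphisms\<close>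

abbreviation leibniz :: "alg4 \<Rightarrow> bool" where
  "leibniz L \<equiv> leibniz_on L UNIV"

lemma isomorphic_alg_refl: "isomorphic_alg L L"
  unfolding isomorphic_alg_def by (rule exI[of _ id]) (simp add: clin_iff)

lemma isomorphic_alg_sym:
  assumes "isomorphic_alg L M" shows "isomorphic_alg M L"
proof -
  obtain f where f: "clin f" "bij f" "\<And>x y. f (L x y) = M (f x) (f y)"
    using assms unfolding isomorphic_alg_def by blast
  have "clin (inv f)"
    using f(1,2) unfolding clin_def by (simp add: bij_is_inj vec.inj_linear_imp_inv_linear)
  moreover have "bij (inv f)" using f(2) by (simp add: bij_imp_bij_inv)
  moreover have "inv f (M x y) = L (inv f x) (inv f y)" for x y
    using f(2,3) by (metis bij_inv_eq_iff)
  ultimately show ?thesis unfolding isomorphic_alg_def by blast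
qed

lemma isomorphic_alg_trans:
  assumes "isomorphic_alg L M" "isomorphic_alg M N" shows "isomorphic_alg L N"
proof -
  obtain f where f: "clin f" "bij f" "\<And>x y. f (L x y) = M (f x) (f y)"
    using assms(1) unfolding isomorphic_alg_def by blast
  obtain g where g: "clin g" "bij g" "\<And>x y. g (M x y) = N (g x) (g y)"
    using assms(2) unfolding isomorphic_alg_def by blast
  have "clin (g \<circ> f)" using f(1) g(1) by (simp add: clin_iff)
  moreover have "bij (g \<circ> f)" using f(2) g(2) by (rule bij_comp)
  moreover have "(g \<circ> f) (L x y) = N ((g \<circ> f) x) ((g \<circ> f) y)" for x y using f(3) g(3) by simp
  ultimately show ?thesis unfolding isomorphic_alg_def by blast
qed

lemma leibniz_iso:
  assumes "isomorphic_alg M L" "leibniz M" shows "leibniz L"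
  unfolding leibniz_on_def
proof (intro ballI)
  obtain f where f: "clin f" "bij f" "\<And>x y. f (M x y) = L (f x) (f y)"
    using assms(1) unfolding isomorphic_alg_def by blast
  fix x y z
  obtain a b c where abc: "x = f a" "y = f b" "z = f c" using f(2) by (metis bij_pointE)
  have leib: "M (M a b) c = M (M a c) b + M a (M b c)"
    using assms(2) unfolding leibniz_on_def by blast
  have "L (L x y) z = f (M (M a b) c)" using abc f(3) by simp
  also have "\<dots> = f (M (M a c) b) + f (M a (M b c))" unfolding leib by (rule clinD(1)[OF f(1)])
  also have "\<dots> = L (L x z) y + L x (L y z)" using abc f(3) by simp
  finally show "L (L x y) z = L (L x z) y + L x (L y z)" .
qed

lemma left_cube_zero_iso:
  assumes "isomorphic_alg M L" "\<And>x. L x (L x x) = 0" shows "M a (M a a) = 0"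
proof -
  obtain f where f: "clin f" "bij f" "\<And>x y. f (M x y) = L (f x) (f y)"
    using assms(1) unfolding isomorphic_alg_def by blast
  have "f (M a (M a a)) = f 0" using f(3) assms(2) clin_zero[OF f(1)] by simp
  then show ?thesis using f(2) by (simp add: bij_is_inj inj_eq)
qed

lemmas M_defs = M01_def M02_def M03_def M04_def M05_def M06_def M07_def M08_def M09_def M10_def
  M11_def M12_def M13_def M14_def M15_def M16_def M17_def M18_def M19_def M20_def M21_def M22_def

definition M_algebras :: "alg4 set" where
  "M_algebras = {M01, M02, M05, M06, M07, M08, M09, M11, M19, M20, M21, M22}
    \<union> range M03 \<union> range M04 \<union> range M10 \<union> range M12 \<union> range M13 \<union> range M14
    \<union> range M15 \<union> range M16 \<union> M17 ` (- {0}) \<union> M18 ` (- {0})"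

definition M_class :: "alg4 \<Rightarrow> bool" where
  "M_class L \<longleftrightarrow> (\<exists>M\<in>M_algebras. isomorphic_alg L M)"

lemma M_class_if_mem: "L \<in> M_algebras \<Longrightarrow> M_class L"
  unfolding M_class_def using isomorphic_alg_refl by blast

lemma M_class_iso: "isomorphic_alg L L' \<Longrightarrow> M_class L' \<Longrightarrow> M_class L"
  unfolding M_class_def using isomorphic_alg_trans by blast

section \<open>Shape algebras and adapted changes of basis\<close>

datatype shape = Shape
  (sa11: complex) (sa12: complex) (sa21: complex) (sa22: complex)
  (sb11: complex) (sb12: complex) (sb21: complex) (sb22: complex)
  (sg1: complex) (sg2: complex) (sd1: complex) (sd2: complex) (sf: complex)

fun shape_alg :: "shape \<Rightarrow> alg4" where
  "shape_alg (Shape a11 a12 a21 a22 b11 b12 b21 b22 g1 g2 d1 d2 f) x y =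
     v4 0 0 (a11*x$1*y$1 + a12*x$1*y$2 + a21*x$2*y$1 + a22*x$2*y$2)
      (b11*x$1*y$1 + b12*x$1*y$2 + b21*x$2*y$1 + b22*x$2*y$2
       + g1*x$1*y$3 + g2*x$2*y$3 + d1*x$3*y$1 + d2*x$3*y$2 + f*x$3*y$3)"

lemma Shape_eqI:
  "sa11 Q = x1 \<Longrightarrow> sa12 Q = x2 \<Longrightarrow> sa21 Q = x3 \<Longrightarrow> sa22 Q = x4 \<Longrightarrow>
   sb11 Q = x5 \<Longrightarrow> sb12 Q = x6 \<Longrightarrow> sb21 Q = x7 \<Longrightarrow> sb22 Q = x8 \<Longrightarrow>
   sg1 Q = x9 \<Longrightarrow> sg2 Q = x10 \<Longrightarrow> sd1 Q = x11 \<Longrightarrow> sd2 Q = x12 \<Longrightarrow> sf Q = x13 \<Longrightarrow>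
   Q = Shape x1 x2 x3 x4 x5 x6 x7 x8 x9 x10 x11 x12 x13"
  by (cases Q) simp

lemma cbilinear_shape_alg: "cbilinear (shape_alg P)"
  by (cases P) (simp add: cbilinear_def clin_iff vec4_eq_iff algebra_simps)

text \<open>
These changes of basis preserve the shape of a multiplication,
and shape_change computes its structure constants in the new basis.
\<close>

definition adapted_map :: "complex \<Rightarrow> complex \<Rightarrow> complex \<Rightarrow> complex \<Rightarrow> complex \<Rightarrow> complex \<Rightarrow>
    complex \<Rightarrow> complex \<Rightarrow> complex \<Rightarrow> vec4 \<Rightarrow> vec4" where
  "adapted_map p11 p12 p21 p22 l1 l2 c k h a = v4 (p11*a$1 + p12*a$2) (p21*a$1 + p22*a$2)
     (l1*a$1 + l2*a$2 + c*a$3) (k*a$3 + h*a$4)"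

fun shape_change :: "shape \<Rightarrow> complex \<Rightarrow> complex \<Rightarrow> complex \<Rightarrow> complex \<Rightarrow> complex \<Rightarrow> complex \<Rightarrow>
    complex \<Rightarrow> complex \<Rightarrow> complex \<Rightarrow> shape" where
  "shape_change (Shape a11 a12 a21 a22 b11 b12 b21 b22 g1 g2 d1 d2 f) p11 p12 p21 p22 l1 l2 c k h =
    (let A = (\<lambda>u1 u2 w1 w2. a11*u1*w1 + a12*u1*w2 + a21*u2*w1 + a22*u2*w2);
         B = (\<lambda>u1 u2 w1 w2. b11*u1*w1 + b12*u1*w2 + b21*u2*w1 + b22*u2*w2);
         G1 = g1*p11 + g2*p21; G2 = g1*p12 + g2*p22;
         D1 = d1*p11 + d2*p21; D2 = d1*p12 + d2*p22;
         B' = (\<lambda>u1 u2 w1 w2 Gi Dj li lj.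
           (B u1 u2 w1 w2 + Gi*lj + li*Dj + f*li*lj - (k/c)*A u1 u2 w1 w2)/h)
     in Shape (A p11 p21 p11 p21 / c) (A p11 p21 p12 p22 / c) (A p12 p22 p11 p21 / c)
       (A p12 p22 p12 p22 / c)
       (B' p11 p21 p11 p21 G1 D1 l1 l1) (B' p11 p21 p12 p22 G1 D2 l1 l2)
       (B' p12 p22 p11 p21 G2 D1 l2 l1) (B' p12 p22 p12 p22 G2 D2 l2 l2)
       (c*(G1 + f*l1)/h) (c*(G2 + f*l2)/h) (c*(D1 + f*l1)/h) (c*(D2 + f*l2)/h) (f*c^2/h))"

lemma shape_alg_adapted_map:
  assumes "c \<noteq> 0" "h \<noteq> 0"
  shows "shape_alg P (adapted_map p11 p12 p21 p22 l1 l2 c k h x) (adapted_map p11 p12 p21 p22 l1 l2 c k h y)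
       = adapted_map p11 p12 p21 p22 l1 l2 c k h (shape_alg (shape_change P p11 p12 p21 p22 l1 l2 c k h) x y)"
proof (cases P)
  case Shape
  show ?thesis unfolding Shape vec4_eq_iff using assms
    by (simp add: adapted_map_def Let_def, intro conjI; simp add: field_simps; algebra)
qed

lemma clin_adapted_map: "clin (adapted_map p11 p12 p21 p22 l1 l2 c k h)"
  by (simp add: clin_iff adapted_map_def vec4_eq_iff algebra_simps)

lemma bij_adapted_map:
  assumes "p11*p22 - p12*p21 \<noteq> 0" "c \<noteq> 0" "h \<noteq> 0"
  shows "bij (adapted_map p11 p12 p21 p22 l1 l2 c k h)"
proof -
  let ?T = "adapted_map p11 p12 p21 p22 l1 l2 c k h"
  have lin: "Vector_Spaces.linear (*s) (*s) ?T" using clin_adapted_map unfolding clin_def .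
  have "x = 0" if "?T x = 0" for x
  proof -
    have eqs: "p11*x$1 + p12*x$2 = 0" "p21*x$1 + p22*x$2 = 0" "l1*x$1 + l2*x$2 + c*x$3 = 0"
      "k*x$3 + h*x$4 = 0"
      using that by (simp_all add: adapted_map_def vec4_eq_iff)
    have "(p11*p22 - p12*p21) * x$1 = p22*(p11*x$1 + p12*x$2) - p12*(p21*x$1 + p22*x$2)"
      "(p11*p22 - p12*p21) * x$2 = p11*(p21*x$1 + p22*x$2) - p21*(p11*x$1 + p12*x$2)"
      by (simp_all add: algebra_simps)
    then have "x$1 = 0" "x$2 = 0" using eqs assms(1) by simp_all
    then have "x$3 = 0" using eqs assms(2) by simp
    then have "x$4 = 0" using eqs assms(3) by simp
    then show ?thesis using \<open>x$1 = 0\<close> \<open>x$2 = 0\<close> \<open>x$3 = 0\<close> by (simp add: vec4_eq_iff)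
  qed
  then have "inj ?T" using vec.linear_inj_iff_eq_0[OF lin] by blast
  then show ?thesis using vec.linear_inj_imp_surj[OF lin] by (simp add: bij_def)
qed

lemma isomorphic_shape_change:
  assumes "p11*p22 - p12*p21 \<noteq> 0" "c \<noteq> 0" "h \<noteq> 0"
  shows "isomorphic_alg (shape_alg (shape_change P p11 p12 p21 p22 l1 l2 c k h)) (shape_alg P)"
  unfolding isomorphic_alg_def
  using clin_adapted_map bij_adapted_map[OF assms] shape_alg_adapted_map[OF assms(2,3)] by metis

lemma M_class_shape_change:
  assumes "shape_change P p11 p12 p21 p22 l1 l2 c k h = Q"
    and "p11*p22 - p12*p21 \<noteq> 0" "c \<noteq> 0" "h \<noteq> 0" and "M_class (shape_alg Q)"
  shows "M_class (shape_alg P)"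
  using assms M_class_iso isomorphic_alg_sym isomorphic_shape_change by metis

lemma not_leibniz_shape_change:
  assumes "shape_change P p11 p12 p21 p22 l1 l2 c k h = Q"
    and "p11*p22 - p12*p21 \<noteq> 0" "c \<noteq> 0" "h \<noteq> 0" and "\<not> leibniz (shape_alg P)"
  shows "\<not> leibniz (shape_alg Q)"
  using assms leibniz_iso isomorphic_shape_change by metis

lemma M_algebras_eq_shape_alg:
  "M03 \<alpha> = shape_alg (Shape 0 1 (-1) 0 0 0 0 0 \<alpha> 0 (1-\<alpha>) 0 0)"
  "M04 \<alpha> = shape_alg (Shape 0 1 (-1) 0 0 0 0 1 \<alpha> 0 (1-\<alpha>) 0 0)"
  "M05 = shape_alg (Shape 0 1 (-1) 0 0 0 0 0 0 1 1 (-1) 0)"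
  "M06 = shape_alg (Shape 0 1 (-1) 0 0 0 0 1 0 1 1 (-1) 0)"
  "M07 = shape_alg (Shape 0 1 (-1) 0 0 0 0 0 0 0 0 0 1)"
  "M08 = shape_alg (Shape 0 1 (-1) 0 0 1 0 0 0 0 0 0 1)"
  "M09 = shape_alg (Shape 0 1 (-1) 0 1 0 0 0 0 0 0 0 1)"
  "M10 \<alpha> = shape_alg (Shape 0 1 (-1) 0 \<alpha> 0 0 0 1 0 (-1) 0 1)"
  "M11 = shape_alg (Shape 0 1 (-1) 0 0 1 0 0 1 0 (-1) 0 1)"
  "M12 \<alpha> = shape_alg (Shape 0 1 (-1) 0 \<alpha> 0 0 1 1 0 (-1) 0 1)"
  "M13 \<alpha> = shape_alg (Shape 1 1 0 \<alpha> 0 0 0 0 0 0 0 1 0)"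
  "M14 \<alpha> = shape_alg (Shape 1 1 0 \<alpha> 0 0 1 0 0 0 0 1 0)"
  "M15 \<alpha> = shape_alg (Shape 1 1 0 \<alpha> 0 0 0 0 0 0 1 ((1 - csqrt (1 - 4 * \<alpha>)) / 2) 0)"
  "M16 \<alpha> = shape_alg (Shape 1 1 0 \<alpha> 0 0 0 1 0 0 1 ((1 - csqrt (1 - 4 * \<alpha>)) / 2) 0)"
  "M17 \<alpha> = shape_alg (Shape 1 1 0 \<alpha> 0 0 0 0 0 0 1 ((1 + csqrt (1 - 4 * \<alpha>)) / 2) 0)"
  "M18 \<alpha> = shape_alg (Shape 1 1 0 \<alpha> 0 0 0 1 0 0 1 ((1 + csqrt (1 - 4 * \<alpha>)) / 2) 0)"
  "M19 = shape_alg (Shape 1 0 0 1 0 0 0 0 0 0 1 0 0)"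
  "M20 = shape_alg (Shape 1 0 0 1 0 1 0 0 0 0 1 0 0)"
  "M21 = shape_alg (Shape 1 0 0 1 0 0 0 0 0 0 1 \<i> 0)"
  "M22 = shape_alg (Shape 1 0 0 1 0 1 0 0 0 0 1 \<i> 0)"
  by (intro ext, simp only: M_defs tbl_def sum_1_to_4,
      simp add: vec4_eq_iff e_eq_v4 zero_vec4_eq_v4 algebra_simps)+

lemma M_class_normal_forms:
  "M_class (shape_alg (Shape 0 1 (-1) 0 0 0 0 0 \<alpha> 0 (1-\<alpha>) 0 0))"
  "M_class (shape_alg (Shape 0 1 (-1) 0 0 0 0 1 \<alpha> 0 (1-\<alpha>) 0 0))"
  "M_class (shape_alg (Shape 0 1 (-1) 0 0 0 0 0 0 1 1 (-1) 0))"
  "M_class (shape_alg (Shape 0 1 (-1) 0 0 0 0 1 0 1 1 (-1) 0))"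
  "M_class (shape_alg (Shape 0 1 (-1) 0 0 0 0 0 0 0 0 0 1))"
  "M_class (shape_alg (Shape 0 1 (-1) 0 0 1 0 0 0 0 0 0 1))"
  "M_class (shape_alg (Shape 0 1 (-1) 0 1 0 0 0 0 0 0 0 1))"
  "M_class (shape_alg (Shape 0 1 (-1) 0 \<alpha> 0 0 0 1 0 (-1) 0 1))"
  "M_class (shape_alg (Shape 0 1 (-1) 0 0 1 0 0 1 0 (-1) 0 1))"
  "M_class (shape_alg (Shape 0 1 (-1) 0 \<alpha> 0 0 1 1 0 (-1) 0 1))"
  "M_class (shape_alg (Shape 1 1 0 \<alpha> 0 0 0 0 0 0 0 1 0))"
  "M_class (shape_alg (Shape 1 1 0 \<alpha> 0 0 1 0 0 0 0 1 0))"
  "r = (1 - csqrt (1 - 4 * \<alpha>)) / 2 \<Longrightarrow> M_class (shape_alg (Shape 1 1 0 \<alpha> 0 0 0 0 0 0 1 r 0))"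
  "r = (1 - csqrt (1 - 4 * \<alpha>)) / 2 \<Longrightarrow> M_class (shape_alg (Shape 1 1 0 \<alpha> 0 0 0 1 0 0 1 r 0))"
  "r = (1 + csqrt (1 - 4 * \<alpha>)) / 2 \<Longrightarrow> \<alpha> \<noteq> 0 \<Longrightarrow>
     M_class (shape_alg (Shape 1 1 0 \<alpha> 0 0 0 0 0 0 1 r 0))"
  "r = (1 + csqrt (1 - 4 * \<alpha>)) / 2 \<Longrightarrow> \<alpha> \<noteq> 0 \<Longrightarrow>
     M_class (shape_alg (Shape 1 1 0 \<alpha> 0 0 0 1 0 0 1 r 0))"
  "M_class (shape_alg (Shape 1 0 0 1 0 0 0 0 0 0 1 0 0))"
  "M_class (shape_alg (Shape 1 0 0 1 0 1 0 0 0 0 1 0 0))"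
  "M_class (shape_alg (Shape 1 0 0 1 0 0 0 0 0 0 1 \<i> 0))"
  "M_class (shape_alg (Shape 1 0 0 1 0 1 0 0 0 0 1 \<i> 0))"
  by (rule M_class_if_mem, hypsubst?, simp add: M_algebras_def M_algebras_eq_shape_alg[symmetric] imageI)+

lemma M_class_swapped_normal_forms:
  "M_class (shape_alg (Shape 1 0 0 0 0 0 0 0 0 0 0 1 0))"
  "M_class (shape_alg (Shape 1 0 0 0 0 0 1 0 0 0 0 1 0))"
proof -
  define swap :: "vec4 \<Rightarrow> vec4" where "swap a = v4 (a$1) (a$3) (a$2) (a$4)" for a
  have iso: "isomorphic_alg L M" if "\<And>x y. swap (L x y) = M (swap x) (swap y)" for L M
  proof -
    have "clin swap" by (simp add: swap_def clin_iff vec4_eq_iff)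
    moreover have "bij swap" by (rule o_bij[of swap]) (simp_all add: swap_def fun_eq_iff vec4_eq_iff)
    ultimately show ?thesis unfolding isomorphic_alg_def using that by blast
  qed
  have "isomorphic_alg (shape_alg (Shape 1 0 0 0 0 0 0 0 0 0 0 1 0)) M01"
    "isomorphic_alg (shape_alg (Shape 1 0 0 0 0 0 1 0 0 0 0 1 0)) M02"
    by (rule iso, simp only: M_defs tbl_def sum_1_to_4, simp add: swap_def vec4_eq_iff e_eq_v4)+
  moreover have "M_class M01" "M_class M02" by (simp_all add: M_class_if_mem M_algebras_def)
  ultimately show "M_class (shape_alg (Shape 1 0 0 0 0 0 0 0 0 0 0 1 0))"
    "M_class (shape_alg (Shape 1 0 0 0 0 0 1 0 0 0 0 1 0))"
    using M_class_iso by blast+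
qed

section \<open>Nilpotency and generation\<close>

lemma is_prod_ge_1: "is_prod L m p \<Longrightarrow> 1 \<le> m"
  by (induction rule: is_prod.induct) auto

lemma is_prod_fewer_factors: "is_prod L n p \<Longrightarrow> 1 \<le> k \<Longrightarrow> k \<le> n \<Longrightarrow> is_prod L k p"
proof (induction arbitrary: k rule: is_prod.induct)
  case (single x)
  then show ?case using is_prod.single by simp
next
  case (mult i a j b)
  show ?case
  proof (cases "k = 1")
    case True
    then show ?thesis using is_prod.single by simp
  next
    case False
    define k1 where "k1 = min i (k - 1)"
    define k2 where "k2 = k - k1"
    have "1 \<le> k1" "k1 \<le> i" "1 \<le> k2" "k2 \<le> j" "k1 + k2 = k"
      using False mult.prems is_prod_ge_1[OF mult.hyps(1)] is_prod_ge_1[OF mult.hyps(2)]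
      unfolding k1_def k2_def by auto
    then show ?thesis using mult.IH is_prod.mult by metis
  qed
qed

definition prod_space :: "alg4 \<Rightarrow> nat \<Rightarrow> vec4 set" where
  "prod_space L k = vec.span {p. \<exists>m\<ge>k. is_prod L m p}"

lemma subspace_prod_space: "vec.subspace (prod_space L k)"
  unfolding prod_space_def by simp

lemma prod_space_mult:
  assumes "cbilinear L" "q \<in> prod_space L k"
  shows "L x q \<in> prod_space L (Suc k)" "L q x \<in> prod_space L (Suc k)"
proof -
  let ?S = "\<lambda>k. {p. \<exists>m\<ge>k. is_prod L m p}"
  have image: "\<phi> q \<in> prod_space L (Suc k)"
    if lin: "clin \<phi>" and step: "\<And>m p. is_prod L m p \<Longrightarrow> is_prod L (Suc m) (\<phi> p)" for \<phi>
  proof -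
    have "\<phi> ` ?S k \<subseteq> ?S (Suc k)" using step by fastforce
    then have "vec.span (\<phi> ` ?S k) \<subseteq> prod_space L (Suc k)"
      unfolding prod_space_def by (rule vec.span_mono)
    moreover have "\<phi> q \<in> vec.span (\<phi> ` ?S k)"
      using assms(2) vec.linear_span_image[OF lin[unfolded clin_def]] unfolding prod_space_def by blast
    ultimately show ?thesis by blast
  qed
  have left: "is_prod L (Suc m) (L x p)" and right: "is_prod L (Suc m) (L p x)"
    if "is_prod L m p" for m p
    using is_prod.mult[OF is_prod.single that] is_prod.mult[OF that is_prod.single] by simp_all
  show "L x q \<in> prod_space L (Suc k)" using image[OF cbilinearD(8)[OF assms(1)] left] .
  show "L q x \<in> prod_space L (Suc k)" using image[OF cbilinearD(7)[OF assms(1)] right] .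
qed

lemma prod_space_eventually_zero:
  assumes "nilpotent_alg L" obtains n where "n \<ge> 2" "prod_space L n \<subseteq> {0}"
proof -
  obtain n where n: "n > 0" "\<And>p. is_prod L n p \<Longrightarrow> p = 0"
    using assms unfolding nilpotent_alg_def by blast
  have "p = 0" if "is_prod L m p" "m \<ge> max n 2" for m p
    using n is_prod_fewer_factors[OF that(1), of n] that(2) by simp
  then have "{p. \<exists>m\<ge>max n 2. is_prod L m p} \<subseteq> {0}" by blast
  then have "prod_space L (max n 2) \<subseteq> vec.span {0}"
    unfolding prod_space_def by (rule vec.span_mono)
  then show ?thesis using that[of "max n 2"] by simp
qed

definition products_with :: "alg4 \<Rightarrow> vec4 set \<Rightarrow> vec4 set" where
  "products_with L U = {L x u |x u. u \<in> U} \<union> {L u x |x u. u \<in> U}"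

lemma subset_zero_if_subset_span_products_with:
  assumes "cbilinear L" "nilpotent_alg L"
    and "U \<subseteq> prod_space L 2" "U \<subseteq> vec.span (products_with L U)"
  shows "U \<subseteq> {0}"
proof -
  have "U \<subseteq> prod_space L k" if "k \<ge> 2" for k
    using that
  proof (induction k rule: nat_induct_at_least)
    case base
    show ?case by (fact assms(3))
  next
    case (Suc k)
    have "L x u \<in> prod_space L (Suc k)" "L u x \<in> prod_space L (Suc k)" if "u \<in> U" for x u
      using prod_space_mult[OF assms(1)] Suc.IH that by blast+
    then have "products_with L U \<subseteq> prod_space L (Suc k)"
      unfolding products_with_def by blast
    then have "vec.span (products_with L U) \<subseteq> prod_space L (Suc k)"
      by (rule vec.span_minimal[OF _ subspace_prod_space])
    then show ?case using assms(4) by blast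
  qed
  moreover obtain n where "n \<ge> 2" "prod_space L n \<subseteq> {0}"
    using prod_space_eventually_zero[OF assms(2)] .
  ultimately show ?thesis by blast
qed

lemma gen_subalg_subspace: "vec.subspace (gen_subalg L S)"
  unfolding gen_subalg_def by (rule vec.subspace_Inter) blast

lemma gen_subalg_superset: "S \<subseteq> gen_subalg L S"
  unfolding gen_subalg_def by blast

lemma gen_subalg_mult: "x \<in> gen_subalg L S \<Longrightarrow> y \<in> gen_subalg L S \<Longrightarrow> L x y \<in> gen_subalg L S"
  unfolding gen_subalg_def by blast

definition alg_square :: "alg4 \<Rightarrow> vec4 set" where
  "alg_square L = vec.span {L x y |x y. True}"

lemma span_alg_square [simp]: "vec.span (alg_square L) = alg_square L"
  by (simp add: alg_square_def vec.span_span)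

lemma mult_in_alg_square: "L x y \<in> alg_square L"
  unfolding alg_square_def by (rule vec.span_base) blast

lemma alg_square_subset_prod_space_2: "alg_square L \<subseteq> prod_space L 2"
proof -
  have "is_prod L 2 (L x y)" for x y
    using is_prod.mult[OF is_prod.single is_prod.single, of L x y] unfolding one_add_one .
  then have "{L x y |x y. True} \<subseteq> prod_space L 2"
    unfolding prod_space_def by (blast intro: vec.span_base)
  then show ?thesis
    unfolding alg_square_def using vec.span_minimal[OF _ subspace_prod_space] by blast
qed

lemma gen_subalg_plus_prod_space_eq_UNIV:
  assumes "cbilinear L" "vec.span (insert x (alg_square L)) = UNIV" "k \<ge> 2"
  shows "{b + q |b q. b \<in> gen_subalg L {x} \<and> q \<in> prod_space L k} = UNIV"
proof -
  let ?B = "gen_subalg L {x}"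
  let ?Sum = "\<lambda>k. {b + q |b q. b \<in> ?B \<and> q \<in> prod_space L k}"
  have subspace_Sum: "vec.subspace (?Sum k)" for k
    by (rule vec.subspace_sums[OF gen_subalg_subspace subspace_prod_space])
  have Sum_UNIV: "?Sum k = UNIV" if "alg_square L \<subseteq> ?Sum k" for k
  proof -
    have "x = x + 0" "x \<in> ?B" "0 \<in> prod_space L k"
      using gen_subalg_superset vec.subspace_0[OF subspace_prod_space] by auto
    then have "insert x (alg_square L) \<subseteq> ?Sum k" using that by blast
    then have "vec.span (insert x (alg_square L)) \<subseteq> ?Sum k"
      by (rule vec.span_minimal[OF _ subspace_Sum])
    then show ?thesis using assms(2) by auto
  qed
  show ?thesis
    using assms(3)
  proof (induction k rule: nat_induct_at_least)
    case base
    have "z = 0 + z" "0 \<in> ?B" "z \<in> prod_space L 2" if "z \<in> alg_square L" for z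
      using that alg_square_subset_prod_space_2 vec.subspace_0[OF gen_subalg_subspace] by auto
    then have "alg_square L \<subseteq> ?Sum 2" by blast
    then show ?case by (rule Sum_UNIV)
  next
    case (Suc k)
    have "L a b \<in> ?Sum (Suc k)" for a b
    proof -
      obtain b1 q1 where 1: "a = b1 + q1" "b1 \<in> ?B" "q1 \<in> prod_space L k" using Suc.IH by blast
      obtain b2 q2 where 2: "b = b2 + q2" "b2 \<in> ?B" "q2 \<in> prod_space L k" using Suc.IH by blast
      have "L a b = L b1 b2 + (L b1 q2 + L q1 b2 + L q1 q2)"
        unfolding 1(1) 2(1) using cbilinearD[OF assms(1)] by (simp add: algebra_simps)
      moreover have "L b1 b2 \<in> ?B" using gen_subalg_mult 1(2) 2(2) by blast
      moreover have "L b1 q2 + L q1 b2 + L q1 q2 \<in> prod_space L (Suc k)"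
        using prod_space_mult[OF assms(1)] 1(3) 2(3) vec.subspace_add[OF subspace_prod_space] by metis
      ultimately show ?thesis by blast
    qed
    then have "alg_square L \<subseteq> ?Sum (Suc k)"
      unfolding alg_square_def by (intro vec.span_minimal[OF _ subspace_Sum]) blast
    then show ?case by (rule Sum_UNIV)
  qed
qed

lemma gen_subalg_eq_UNIV:
  assumes "cbilinear L" "nilpotent_alg L" "vec.span (insert x (alg_square L)) = UNIV"
  shows "gen_subalg L {x} = UNIV"
proof -
  obtain n where n: "n \<ge> 2" "prod_space L n \<subseteq> {0}"
    using prod_space_eventually_zero[OF assms(2)] .
  have "z \<in> gen_subalg L {x}" for z
  proof -
    obtain b q where "z = b + q" "b \<in> gen_subalg L {x}" "q \<in> prod_space L n"
      using gen_subalg_plus_prod_space_eq_UNIV[OF assms(1,3) n(1)] by blast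
    then show ?thesis using n(2) by auto
  qed
  then show ?thesis by blast
qed

lemma mono_leibniz_left_cube_zero:
  assumes "mono_leibniz L" shows "L x (L x x) = 0"
proof -
  have "x \<in> gen_subalg L {x}" "L x x \<in> gen_subalg L {x}"
    using gen_subalg_superset gen_subalg_mult by blast+
  then have "L (L x x) x = L (L x x) x + L x (L x x)"
    using assms unfolding mono_leibniz_def leibniz_on_def by blast
  then show ?thesis by simp
qed

section \<open>The flag L^2 \<supset> L^3 of a non-Leibniz algebra\<close>

definition alg_cube :: "alg4 \<Rightarrow> vec4 set" where
  "alg_cube L = vec.span (products_with L (alg_square L))"

lemma span_alg_cube [simp]: "vec.span (alg_cube L) = alg_cube L"
  by (simp add: alg_cube_def vec.span_span)

lemma mult_alg_square_in_alg_cube: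
  assumes "d \<in> alg_square L" shows "L x d \<in> alg_cube L" "L d x \<in> alg_cube L"
proof -
  have "L x d \<in> products_with L (alg_square L)" "L d x \<in> products_with L (alg_square L)"
    using assms unfolding products_with_def by blast+
  then show "L x d \<in> alg_cube L" "L d x \<in> alg_cube L"
    unfolding alg_cube_def by (simp_all add: vec.span_base)
qed

lemma alg_cube_subset_alg_square: "alg_cube L \<subseteq> alg_square L"
proof -
  have "products_with L (alg_square L) \<subseteq> alg_square L"
    unfolding products_with_def using mult_in_alg_square by blast
  then show ?thesis
    unfolding alg_cube_def by (rule vec.span_minimal) (simp add: alg_square_def)
qed

lemma leibniz_if_alg_cube_zero:
  assumes "alg_cube L \<subseteq> {0}" shows "leibniz L"
proof -
  have "L (L x y) z = 0" "L x (L y z) = 0" for x y z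
    using assms mult_alg_square_in_alg_cube mult_in_alg_square by blast+
  then show ?thesis unfolding leibniz_on_def by simp
qed

lemma alg_square_not_subset_alg_cube:
  assumes "cbilinear L" "nilpotent_alg L" "\<not> leibniz L"
  shows "\<not> alg_square L \<subseteq> alg_cube L"
proof
  assume "alg_square L \<subseteq> alg_cube L"
  then have "alg_square L \<subseteq> {0}"
    using subset_zero_if_subset_span_products_with[OF assms(1,2) alg_square_subset_prod_space_2]
    unfolding alg_cube_def by blast
  then show False using assms(3) alg_cube_subset_alg_square leibniz_if_alg_cube_zero by blast
qed

lemma dim_alg_square_le_2:
  assumes "cbilinear L" "nilpotent_alg L" "mono_leibniz L" "\<not> leibniz L"
  shows "vec.dim (alg_square L) \<le> 2"
proof (rule ccontr)
  assume "\<not> ?thesis"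
  then have "vec.dim (alg_square L) \<ge> 3" by simp
  then obtain x where "vec.span (insert x (alg_square L)) = UNIV"
    using span_insert_eq_UNIV_if_dim_ge_3 by blast
  then have "gen_subalg L {x} = UNIV" using gen_subalg_eq_UNIV assms(1,2) by blast
  then show False using assms(3,4) unfolding mono_leibniz_def by metis
qed

lemma dim_alg_cube_alg_square:
  assumes "cbilinear L" "nilpotent_alg L" "mono_leibniz L" "\<not> leibniz L"
  shows "vec.dim (alg_cube L) = 1" "vec.dim (alg_square L) = 2"
proof -
  have "alg_cube L \<subset> alg_square L"
    using alg_cube_subset_alg_square alg_square_not_subset_alg_cube[OF assms(1,2,4)] by blast
  then have "vec.dim (alg_cube L) < vec.dim (alg_square L)" by (intro vec.dim_psubset) simp
  moreover have "\<not> alg_cube L \<subseteq> {0}" using assms(4) leibniz_if_alg_cube_zero by blast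
  then have "vec.dim (alg_cube L) \<noteq> 0" by simp
  ultimately show "vec.dim (alg_cube L) = 1" "vec.dim (alg_square L) = 2"
    using dim_alg_square_le_2[OF assms] by linarith+
qed

lemma alg_cube_annihilates:
  assumes "cbilinear L" "nilpotent_alg L" "vec.dim (alg_cube L) = 1" "w \<in> alg_cube L"
  shows "L x w = 0" "L w x = 0"
proof -
  let ?W = "alg_cube L"
  have "products_with L ?W \<subseteq> ?W"
    unfolding products_with_def using alg_cube_subset_alg_square mult_alg_square_in_alg_cube by blast
  then have "vec.span (products_with L ?W) \<subseteq> ?W" by (rule vec.span_minimal) (simp add: alg_cube_def)
  moreover have "\<not> ?W \<subseteq> vec.span (products_with L ?W)"
  proof
    assume "?W \<subseteq> vec.span (products_with L ?W)"
    then have "?W \<subseteq> {0}"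
      using subset_zero_if_subset_span_products_with[OF assms(1,2)]
        alg_cube_subset_alg_square alg_square_subset_prod_space_2 by blast
    then have "vec.dim ?W = 0" by simp
    then show False using assms(3) by simp
  qed
  ultimately have "vec.span (products_with L ?W) \<subset> vec.span ?W" by auto
  then have "vec.dim (products_with L ?W) < vec.dim ?W" by (rule vec.dim_psubset)
  then have "products_with L ?W \<subseteq> {0}" using assms(3) by simp
  then show "L x w = 0" "L w x = 0" using assms(4) unfolding products_with_def by blast+
qed

lemma adapted_basis_exists:
  assumes "cbilinear L" "nilpotent_alg L" "mono_leibniz L" "\<not> leibniz L"
  obtains v1 v2 v3 w where "vec.span {v1, v2, v3, w} = UNIV" "distinct [v1, v2, v3, w]"
    "alg_square L = vec.span {v3, w}" "alg_cube L = vec.span {w}"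
proof -
  note dims = dim_alg_cube_alg_square[OF assms]
  obtain w where w: "w \<noteq> 0" "alg_cube L = vec.span {w}"
    using dim_eq_1_obtains_span_singleton[OF dims(1)] by (metis span_alg_cube)
  obtain v3 where v3: "v3 \<in> alg_square L" "v3 \<notin> alg_cube L"
    using alg_square_not_subset_alg_cube[OF assms(1,2,4)] by blast
  have "w \<in> alg_cube L" using w(2) by (simp add: vec.span_base)
  then have "v3 \<noteq> w" "w \<in> alg_square L" using v3 alg_cube_subset_alg_square by auto
  have indep: "vec.independent {v3, w}" using v3(2) w \<open>v3 \<noteq> w\<close> by (simp add: vec.independent_insert)
  have "vec.span {v3, w} = vec.span (alg_square L)"
  proof (rule vec.dim_eq_span)
    show "{v3, w} \<subseteq> alg_square L" using v3(1) \<open>w \<in> alg_square L\<close> by simp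
    show "vec.dim (alg_square L) \<le> vec.dim {v3, w}"
      using dims(2) vec.dim_eq_card_independent[OF indep] \<open>v3 \<noteq> w\<close> by simp
  qed
  then have "alg_square L = vec.span {v3, w}" by simp
  moreover obtain v1 v2 where "vec.span {v1, v2, v3, w} = UNIV" "distinct [v1, v2, v3, w]"
    using extend_pair_to_basis[OF indep \<open>v3 \<noteq> w\<close>] .
  ultimately show ?thesis using that w(2) by blast
qed

lemma isomorphic_shape_alg_if_adapted_basis:
  assumes bil: "cbilinear L"
    and basis: "vec.span {v1, v2, v3, w} = UNIV" "distinct [v1, v2, v3, w]"
    and square: "\<And>x y. L x y \<in> vec.span {v3, w}"
    and cube: "\<And>x. L x v3 \<in> vec.span {w}" "\<And>x. L v3 x \<in> vec.span {w}"
    and ann: "\<And>x. L x w = 0" "\<And>x. L w x = 0"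
  shows "\<exists>P. isomorphic_alg (shape_alg P) L"
proof -
  note Lb = cbilinearD(1-6)[OF bil]
  have in_square: "\<exists>s t. z = s *s v3 + t *s w" if z: "z \<in> vec.span {v3, w}" for z
  proof -
    obtain s where "z - s *s v3 \<in> vec.span {w}" using z vec.span_breakdown_eq[of z v3 "{w}"] by blast
    then obtain t where "z - s *s v3 = t *s w" unfolding vec.span_singleton by blast
    then have "z = s *s v3 + t *s w" by (simp add: algebra_simps)
    then show ?thesis by blast
  qed
  have in_cube: "\<exists>t. z = t *s w" if "z \<in> vec.span {w}" for z
    using that unfolding vec.span_singleton by blast
  obtain a11 b11 where 11: "L v1 v1 = a11 *s v3 + b11 *s w" using in_square square by blast
  obtain a12 b12 where 12: "L v1 v2 = a12 *s v3 + b12 *s w" using in_square square by blast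
  obtain a21 b21 where 21: "L v2 v1 = a21 *s v3 + b21 *s w" using in_square square by blast
  obtain a22 b22 where 22: "L v2 v2 = a22 *s v3 + b22 *s w" using in_square square by blast
  obtain g1 where g1: "L v1 v3 = g1 *s w" using in_cube cube by blast
  obtain g2 where g2: "L v2 v3 = g2 *s w" using in_cube cube by blast
  obtain d1 where d1: "L v3 v1 = d1 *s w" using in_cube cube by blast
  obtain d2 where d2: "L v3 v2 = d2 *s w" using in_cube cube by blast
  obtain f where f: "L v3 v3 = f *s w" using in_cube cube by blast
  define T where "T a = a$1 *s v1 + a$2 *s v2 + a$3 *s v3 + a$4 *s w" for a :: vec4
  define P where "P = Shape a11 a12 a21 a22 b11 b12 b21 b22 g1 g2 d1 d2 f"
  have T_add: "T (x + y) = T x + T y" and T_scale: "T (c *s x) = c *s T x" for x y c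
    unfolding T_def by (simp_all add: algebra_simps)
  have "clin T" "bij T" unfolding T_def by (fact clin_bij_coordinate_map[OF basis])+
  moreover have "T (shape_alg P a b) = L (T a) (T b)" for a b
  proof (rule cbilinear_eqI_on_basis[where F = "\<lambda>a b. T (shape_alg P a b)" and G = "\<lambda>a b. L (T a) (T b)"])
    note S = cbilinearD(1-4)[OF cbilinear_shape_alg[of P]]
    show "cbilinear (\<lambda>a b. T (shape_alg P a b))" "cbilinear (\<lambda>a b. L (T a) (T b))"
      by (simp_all add: cbilinear_def clin_iff T_add T_scale S Lb)
  next
    fix x y
    assume "x \<in> {v4 1 0 0 0, v4 0 1 0 0, v4 0 0 1 0, v4 0 0 0 1}"
      "y \<in> {v4 1 0 0 0, v4 0 1 0 0, v4 0 0 1 0, v4 0 0 0 1}"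
    then show "T (shape_alg P x y) = L (T x) (T y)"
      unfolding P_def T_def by (elim insertE emptyE; simp add: Lb 11 12 21 22 g1 g2 d1 d2 f ann)
  qed
  ultimately show ?thesis unfolding isomorphic_alg_def by blast
qed

lemma isomorphic_shape_alg_if_not_leibniz:
  assumes "cbilinear L" "nilpotent_alg L" "mono_leibniz L" "\<not> leibniz L"
  shows "\<exists>P. isomorphic_alg (shape_alg P) L"
proof -
  obtain v1 v2 v3 w where basis: "vec.span {v1, v2, v3, w} = UNIV" "distinct [v1, v2, v3, w]"
    and square: "alg_square L = vec.span {v3, w}" and cube: "alg_cube L = vec.span {w}"
    using adapted_basis_exists[OF assms] .
  have "v3 \<in> alg_square L" "w \<in> alg_cube L" unfolding square cube by (simp_all add: vec.span_base)
  note ann = alg_cube_annihilates[OF assms(1,2) dim_alg_cube_alg_square(1)[OF assms] \<open>w \<in> alg_cube L\<close>]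
  show ?thesis
  proof (rule isomorphic_shape_alg_if_adapted_basis[OF assms(1) basis _ _ _ ann])
    show "L x y \<in> vec.span {v3, w}" for x y using mult_in_alg_square square by metis
    show "L x v3 \<in> vec.span {w}" "L v3 x \<in> vec.span {w}" for x
      using mult_alg_square_in_alg_cube[OF \<open>v3 \<in> alg_square L\<close>] cube by simp_all
  qed
qed

section \<open>The identity x(xx) = 0 on shape algebras\<close>

lemma binary_quadratic_times_linear_eq_0:
  fixes a s b g1 g2 :: "'a::field_char_0"
  assumes prod: "\<And>x y. (a*x*x + s*x*y + b*y*y) * (g1*x + g2*y) = 0"
    and nonzero: "a \<noteq> 0 \<or> s \<noteq> 0 \<or> b \<noteq> 0"
  shows "g1 = 0 \<and> g2 = 0"
proof -
  have sum_diff: "u = 0" if "u + v = 0" "u - v = 0" for u v :: 'a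
  proof -
    have "2 * u = (u + v) + (u - v)" by (simp add: algebra_simps)
    then show ?thesis using that by simp
  qed
  have e1: "a * g1 = 0" and e2: "b * g2 = 0" and e3: "(a + s + b) * (g1 + g2) = 0"
    using prod[of 1 0] prod[of 0 1] prod[of 1 1] by simp_all
  have e4: "(a - s + b) * (g1 - g2) = 0"
    using prod[of 1 "-1"] by (simp add: algebra_simps)
  consider "a \<noteq> 0" | "a = 0" "b \<noteq> 0" | "a = 0" "b = 0" "s \<noteq> 0" using nonzero by blast
  then show ?thesis
  proof cases
    case 1
    then have "g1 = 0" using e1 by simp
    moreover have "g2 = 0"
    proof (rule ccontr)
      assume "g2 \<noteq> 0"
      then have "a + s = 0" "a - s = 0" using e2 e3 e4 \<open>g1 = 0\<close> by auto
      then show False using 1 sum_diff by blast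
    qed
    ultimately show ?thesis ..
  next
    case 2
    then have "g2 = 0" using e2 by simp
    moreover have "g1 = 0"
    proof (rule ccontr)
      assume "g1 \<noteq> 0"
      then have "b + s = 0" "b - s = 0" using e3 e4 2 \<open>g2 = 0\<close> by (auto simp: algebra_simps)
      then show False using 2 sum_diff by blast
    qed
    ultimately show ?thesis by blast
  next
    case 3
    then have "g1 + g2 = 0" "g1 - g2 = 0" using e3 e4 by auto
    then show ?thesis using sum_diff[of g1 g2] by simp
  qed
qed

lemma quadratic_times_linear_eq_0:
  fixes a s b g1 g2 f :: "'a::field_char_0"
  assumes prod: "\<And>x y z. (a*x*x + s*x*y + b*y*y) * (g1*x + g2*y + f*z) = 0"
    and nonzero: "a \<noteq> 0 \<or> s \<noteq> 0 \<or> b \<noteq> 0"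
  shows "g1 = 0 \<and> g2 = 0 \<and> f = 0"
proof -
  have lin: "(a*x*x + s*x*y + b*y*y) * (g1*x + g2*y) = 0" for x y
    using prod[of x y 0] by simp
  have "(a*x*x + s*x*y + b*y*y) * f = 0" for x y
    using prod[of x y 1] lin[of x y] by (simp add: distrib_left)
  from this[of 1 0] this[of 0 1] this[of 1 1] have "f = 0"
    using nonzero by auto
  with binary_quadratic_times_linear_eq_0[OF lin nonzero] show ?thesis by blast
qed

lemma shape_alg_left_cube_zero_constraint:
  assumes "\<And>x. shape_alg (Shape a11 a12 a21 a22 b11 b12 b21 b22 g1 g2 d1 d2 f) x
      (shape_alg (Shape a11 a12 a21 a22 b11 b12 b21 b22 g1 g2 d1 d2 f) x x) = 0"
    and "a11 \<noteq> 0 \<or> a12 + a21 \<noteq> 0 \<or> a22 \<noteq> 0"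
  shows "g1 = 0 \<and> g2 = 0 \<and> f = 0"
proof (rule quadratic_times_linear_eq_0[OF _ assms(2)])
  fix x y z
  have "shape_alg (Shape a11 a12 a21 a22 b11 b12 b21 b22 g1 g2 d1 d2 f) (v4 x y z 0)
    (shape_alg (Shape a11 a12 a21 a22 b11 b12 b21 b22 g1 g2 d1 d2 f) (v4 x y z 0) (v4 x y z 0)) $ 4 = 0"
    by (simp only: assms(1) zero_index)
  then show "(a11*x*x + (a12 + a21)*x*y + a22*y*y) * (g1*x + g2*y + f*z) = 0"
    by (simp add: algebra_simps)
qed

section \<open>Normal forms\<close>

lemma leibniz_shape_alg_g_d_f_0: "leibniz (shape_alg (Shape a11 a12 a21 a22 b11 b12 b21 b22 0 0 0 0 0))"
  unfolding leibniz_on_def by (simp add: vec4_eq_iff)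

lemma leibniz_shape_alg_a_0: "leibniz (shape_alg (Shape 0 0 0 0 b11 b12 b21 b22 g1 g2 d1 d2 f))"
  unfolding leibniz_on_def by (simp add: vec4_eq_iff)

lemma leibniz_shape_alg_alternating_d_eq_neg_g:
  "leibniz (shape_alg (Shape 0 1 (-1) 0 b11 b12 b21 b22 g1 g2 (-g1) (-g2) 0))"
  unfolding leibniz_on_def by (simp add: vec4_eq_iff algebra_simps)

lemma leibniz_shape_alg_e11_d2_0: "leibniz (shape_alg (Shape 1 0 0 0 b11 b12 b21 b22 0 0 d1 0 0))"
  unfolding leibniz_on_def by (simp add: vec4_eq_iff algebra_simps)

lemma leibniz_shape_alg_upper_0_d_11: "leibniz (shape_alg (Shape 1 1 0 0 b11 b12 b21 b22 0 0 1 1 0))"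
  unfolding leibniz_on_def by (simp add: vec4_eq_iff algebra_simps)

lemma M_class_scale_b:
  assumes "t \<noteq> 0"
    and "M_class (shape_alg (Shape a11 a12 a21 a22 (b11/t) (b12/t) (b21/t) (b22/t) g1 g2 d1 d2 0))"
  shows "M_class (shape_alg (Shape a11 a12 a21 a22 b11 b12 b21 b22 g1 g2 d1 d2 0))"
proof (rule M_class_shape_change[of _ t 0 0 t 0 0 "t^2" 0 "t^3"])
  show "shape_change (Shape a11 a12 a21 a22 b11 b12 b21 b22 g1 g2 d1 d2 0) t 0 0 t 0 0 (t^2) 0 (t^3) =
    Shape a11 a12 a21 a22 (b11/t) (b12/t) (b21/t) (b22/t) g1 g2 d1 d2 0"
    using assms(1) by (simp add: Let_def field_simps power2_eq_square power3_eq_cube)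
qed (use assms in simp_all)

lemma M_class_family_M13_M14: "M_class (shape_alg (Shape 1 1 0 a b11 b12 b21 b22 0 0 0 1 0))"
proof (rule M_class_shape_change[of _ 1 0 0 1 "b11 - b12" "b11*a - b22" 1 b11 1])
  show "shape_change (Shape 1 1 0 a b11 b12 b21 b22 0 0 0 1 0) 1 0 0 1 (b11 - b12) (b11*a - b22) 1 b11 1
     = Shape 1 1 0 a 0 0 b21 0 0 0 0 1 0" by (simp add: Let_def algebra_simps)
  show "M_class (shape_alg (Shape 1 1 0 a 0 0 b21 0 0 0 0 1 0))"
    using M_class_normal_forms M_class_scale_b[of b21 1 1 0 a 0 0 b21 0 0 0 0 1]
    by (cases "b21 = 0") simp_all
qed simp_all

lemma quadratic_root_cases:
  assumes "r^2 - r + a = (0::complex)"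
  shows "r = (1 - csqrt (1 - 4 * a)) / 2 \<or> r = (1 + csqrt (1 - 4 * a)) / 2"
proof -
  let ?s = "csqrt (1 - 4 * a)"
  have "(2*r - 1 - ?s) * (2*r - 1 + ?s) = (2*r - 1)^2 - ?s^2"
    by (simp add: algebra_simps power2_eq_square)
  also have "\<dots> = 4 * (r^2 - r + a)"
    unfolding power2_csqrt by (simp add: algebra_simps power2_eq_square)
  finally have "2*r - 1 - ?s = 0 \<or> 2*r - 1 + ?s = 0" using assms by simp
  then show ?thesis by (auto simp: field_simps)
qed

lemma M_class_family_M15_M18:
  assumes "r^2 - r + a = 0" "r \<noteq> 1"
  shows "M_class (shape_alg (Shape 1 1 0 a b11 b12 b21 b22 0 0 1 r 0))"
proof -
  obtain l1 where l1: "l1 * (1 - r) = b12 - b11" using assms(2) by (metis nonzero_eq_divide_eq right_minus_eq)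
  define R where "R = b22 - b21*r - (l1 + b11)*a"
  show ?thesis
  proof (rule M_class_shape_change[of _ 1 0 0 1 l1 "-b21" 1 "l1 + b11" 1])
    show "shape_change (Shape 1 1 0 a b11 b12 b21 b22 0 0 1 r 0) 1 0 0 1 l1 (-b21) 1 (l1 + b11) 1
     = Shape 1 1 0 a 0 0 0 R 0 0 1 r 0"
      unfolding R_def using l1 by (simp add: Let_def) algebra
    have roots: "r = (1 - csqrt (1 - 4 * a)) / 2 \<or> (r = (1 + csqrt (1 - 4 * a)) / 2 \<and> a \<noteq> 0)"
      using quadratic_root_cases[OF assms(1)] assms by auto
    show "M_class (shape_alg (Shape 1 1 0 a 0 0 0 R 0 0 1 r 0))"
    proof (cases "R = 0")
      case True
      then show ?thesis using roots M_class_normal_forms by auto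
    next
      case False
      then show ?thesis using roots M_class_normal_forms M_class_scale_b[of R 1 1 0 a 0 0 0 R 0 0 1 r]
        by auto
    qed
  qed simp_all
qed

lemma M_class_family_M19_M20: "M_class (shape_alg (Shape 1 0 0 1 b11 b12 b21 b22 0 0 1 0 0))"
proof (rule M_class_shape_change[of _ 1 0 0 1 "b22 - b11" "-b21" 1 b22 1])
  show "shape_change (Shape 1 0 0 1 b11 b12 b21 b22 0 0 1 0 0) 1 0 0 1 (b22 - b11) (-b21) 1 b22 1
     = Shape 1 0 0 1 0 b12 0 0 0 0 1 0 0" by (simp add: Let_def algebra_simps)
  show "M_class (shape_alg (Shape 1 0 0 1 0 b12 0 0 0 0 1 0 0))"
    using M_class_normal_forms M_class_scale_b[of b12 1 0 0 1 0 b12 0 0 0 0 1 0]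
    by (cases "b12 = 0") simp_all
qed simp_all

lemma M_class_family_M21_M22: "M_class (shape_alg (Shape 1 0 0 1 b11 b12 b21 b22 0 0 1 \<i> 0))"
proof -
  define b where "b = b12 + \<i>*(b22 - \<i>*b21 - b11)"
  show ?thesis
  proof (rule M_class_shape_change[of _ 1 0 0 1 "b22 - \<i>*b21 - b11" "-b21" 1 "b22 - \<i>*b21" 1])
    show "shape_change (Shape 1 0 0 1 b11 b12 b21 b22 0 0 1 \<i> 0) 1 0 0 1 (b22 - \<i>*b21 - b11) (-b21) 1
        (b22 - \<i>*b21) 1 = Shape 1 0 0 1 0 b 0 0 0 0 1 \<i> 0"
      unfolding b_def by (simp add: Let_def algebra_simps)
    show "M_class (shape_alg (Shape 1 0 0 1 0 b 0 0 0 0 1 \<i> 0))"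
      using M_class_normal_forms M_class_scale_b[of b 1 0 0 1 0 b 0 0 0 0 1 \<i>]
      by (cases "b = 0") simp_all
  qed simp_all
qed

lemma M_class_family_M01_M02: "M_class (shape_alg (Shape 1 0 0 0 b11 b12 b21 b22 0 0 0 1 0))"
proof (rule M_class_shape_change[of _ 1 0 0 1 "-b12" "-b22" 1 b11 1])
  show "shape_change (Shape 1 0 0 0 b11 b12 b21 b22 0 0 0 1 0) 1 0 0 1 (-b12) (-b22) 1 b11 1
     = Shape 1 0 0 0 0 0 b21 0 0 0 0 1 0" by (simp add: Let_def algebra_simps)
  show "M_class (shape_alg (Shape 1 0 0 0 0 0 b21 0 0 0 0 1 0))"
    using M_class_swapped_normal_forms M_class_scale_b[of b21 1 0 0 0 0 0 b21 0 0 0 0 1]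
    by (cases "b21 = 0") simp_all
qed simp_all

lemma M_class_upper:
  assumes "\<not> leibniz (shape_alg (Shape 1 1 0 a b11 b12 b21 b22 0 0 d1 d2 0))"
  shows "M_class (shape_alg (Shape 1 1 0 a b11 b12 b21 b22 0 0 d1 d2 0))"
proof -
  define q where "q = d2^2 - d1*d2 + a*d1^2"
  show ?thesis
  proof (cases "q = 0")
    case False
    \<comment> \<open>The matrix (d2, a d1; -d1, d2 - d1) has determinant q, multiplies the form A by q
      and moves d to (0, q).\<close>
    let ?Q = "shape_change (Shape 1 1 0 a b11 b12 b21 b22 0 0 d1 d2 0) d2 (a*d1) (-d1) (d2 - d1) 0 0 q 0 (q^2)"
    have new: "?Q = Shape 1 1 0 a (sb11 ?Q) (sb12 ?Q) (sb21 ?Q) (sb22 ?Q) 0 0 0 1 0"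
      by (rule Shape_eqI; simp add: Let_def field_simps power2_eq_square False; use q_def in algebra)
    have "d2 * (d2 - d1) - a * d1 * - d1 \<noteq> 0"
      using False unfolding q_def by (simp add: algebra_simps power2_eq_square)
    then show ?thesis
      by (rule M_class_shape_change[OF new _ False]) (simp_all add: False M_class_family_M13_M14)
  next
    case True
    have "d1 \<noteq> 0"
      using True assms leibniz_shape_alg_g_d_f_0 unfolding q_def by fastforce
    define r where "r = d2 / d1"
    have new: "shape_change (Shape 1 1 0 a b11 b12 b21 b22 0 0 d1 d2 0) 1 0 0 1 0 0 1 0 d1
       = Shape 1 1 0 a (b11/d1) (b12/d1) (b21/d1) (b22/d1) 0 0 1 r 0"
      using \<open>d1 \<noteq> 0\<close> unfolding r_def by (simp add: Let_def field_simps)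
    have "r^2 - r + a = 0"
      using True \<open>d1 \<noteq> 0\<close> unfolding q_def r_def by (simp add: field_simps power2_eq_square)
    moreover have "r \<noteq> 1"
      using not_leibniz_shape_change[OF new _ _ \<open>d1 \<noteq> 0\<close> assms] leibniz_shape_alg_upper_0_d_11
        \<open>r^2 - r + a = 0\<close> by auto
    ultimately show ?thesis
      by (intro M_class_shape_change[OF new _ _ \<open>d1 \<noteq> 0\<close>] M_class_family_M15_M18) simp_all
  qed
qed

lemma M_class_a11_1_nonsymmetric:
  assumes "\<not> leibniz (shape_alg (Shape 1 a12 a21 a22 b11 b12 b21 b22 0 0 d1 d2 0))" "a12 \<noteq> a21"
  shows "M_class (shape_alg (Shape 1 a12 a21 a22 b11 b12 b21 b22 0 0 d1 d2 0))"
proof -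
  define t where "t = 1 / (a12 - a21)"
  have "t \<noteq> 0" and t: "t * (a12 - a21) = 1" using assms(2) unfolding t_def by simp_all
  let ?Q = "shape_change (Shape 1 a12 a21 a22 b11 b12 b21 b22 0 0 d1 d2 0) 1 (-a21*t) 0 t 0 0 1 0 1"
  have new: "?Q = Shape 1 1 0 (sa22 ?Q) (sb11 ?Q) (sb12 ?Q) (sb21 ?Q) (sb22 ?Q) 0 0 (sd1 ?Q) (sd2 ?Q) 0"
    by (rule Shape_eqI; simp add: Let_def algebra_simps; use t in algebra)
  show ?thesis
    using M_class_shape_change[OF new] not_leibniz_shape_change[OF new _ _ _ assms(1)]
      M_class_upper \<open>t \<noteq> 0\<close> by simp
qed

lemma M_class_identity:
  assumes "\<not> leibniz (shape_alg (Shape 1 0 0 1 b11 b12 b21 b22 0 0 d1 d2 0))"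
  shows "M_class (shape_alg (Shape 1 0 0 1 b11 b12 b21 b22 0 0 d1 d2 0))"
proof -
  define n where "n = d1^2 + d2^2"
  show ?thesis
  proof (cases "n = 0")
    case False
    \<comment> \<open>The matrix (d1, -d2; d2, d1) multiplies the identity form by n and moves d to (n, 0).\<close>
    let ?Q = "shape_change (Shape 1 0 0 1 b11 b12 b21 b22 0 0 d1 d2 0) d1 (-d2) d2 d1 0 0 n 0 (n^2)"
    have new: "?Q = Shape 1 0 0 1 (sb11 ?Q) (sb12 ?Q) (sb21 ?Q) (sb22 ?Q) 0 0 1 0 0"
      by (rule Shape_eqI; simp add: Let_def field_simps power2_eq_square False; use n_def in algebra)
    have "d1 * d1 - - d2 * d2 \<noteq> 0" using False unfolding n_def by (simp add: power2_eq_square)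
    then show ?thesis
      by (rule M_class_shape_change[OF new _ False]) (simp_all add: False M_class_family_M19_M20)
  next
    case True
    have "d1 \<noteq> 0"
      using True assms leibniz_shape_alg_g_d_f_0 unfolding n_def by fastforce
    have "(d2 - \<i>*d1) * (d2 + \<i>*d1) = 0"
      using True unfolding n_def by (simp add: algebra_simps power2_eq_square)
    then consider "d2 = \<i>*d1" | "d2 = -\<i>*d1" by (auto simp: eq_neg_iff_add_eq_0)
    then show ?thesis
    proof cases
      case 1
      have "shape_change (Shape 1 0 0 1 b11 b12 b21 b22 0 0 d1 d2 0) 1 0 0 1 0 0 1 0 d1
         = Shape 1 0 0 1 (b11/d1) (b12/d1) (b21/d1) (b22/d1) 0 0 1 \<i> 0"
        using \<open>d1 \<noteq> 0\<close> 1 by (simp add: Let_def field_simps)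
      then show ?thesis
        by (rule M_class_shape_change) (simp_all add: \<open>d1 \<noteq> 0\<close> M_class_family_M21_M22)
    next
      case 2
      have "shape_change (Shape 1 0 0 1 b11 b12 b21 b22 0 0 d1 d2 0) 1 0 0 (-1) 0 0 1 0 d1
         = Shape 1 0 0 1 (b11/d1) (-b12/d1) (-b21/d1) (b22/d1) 0 0 1 \<i> 0"
        using \<open>d1 \<noteq> 0\<close> 2 by (simp add: Let_def field_simps)
      then show ?thesis
        by (rule M_class_shape_change) (simp_all add: \<open>d1 \<noteq> 0\<close> M_class_family_M21_M22)
    qed
  qed
qed

lemma M_class_e11:
  assumes "\<not> leibniz (shape_alg (Shape 1 0 0 0 b11 b12 b21 b22 0 0 d1 d2 0))"
  shows "M_class (shape_alg (Shape 1 0 0 0 b11 b12 b21 b22 0 0 d1 d2 0))"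
proof -
  have "d2 \<noteq> 0" using assms leibniz_shape_alg_e11_d2_0 by blast
  let ?Q = "shape_change (Shape 1 0 0 0 b11 b12 b21 b22 0 0 d1 d2 0) 1 0 (-d1/d2) 1 0 0 1 0 d2"
  have new: "?Q = Shape 1 0 0 0 (sb11 ?Q) (sb12 ?Q) (sb21 ?Q) (sb22 ?Q) 0 0 0 1 0"
    by (rule Shape_eqI) (simp_all add: Let_def field_simps \<open>d2 \<noteq> 0\<close>)
  show ?thesis
    by (rule M_class_shape_change[OF new _ _ \<open>d2 \<noteq> 0\<close>]) (simp_all add: M_class_family_M01_M02)
qed

lemma M_class_a11_1_symmetric:
  assumes "\<not> leibniz (shape_alg (Shape 1 s s a22 b11 b12 b21 b22 0 0 d1 d2 0))"
  shows "M_class (shape_alg (Shape 1 s s a22 b11 b12 b21 b22 0 0 d1 d2 0))"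
proof -
  let ?Q = "shape_change (Shape 1 s s a22 b11 b12 b21 b22 0 0 d1 d2 0) 1 (-s) 0 1 0 0 1 0 1"
  define D where "D = sa22 ?Q"
  let ?P = "Shape 1 0 0 D (sb11 ?Q) (sb12 ?Q) (sb21 ?Q) (sb22 ?Q) 0 0 (sd1 ?Q) (sd2 ?Q) 0"
  have new: "?Q = ?P"
    unfolding D_def by (rule Shape_eqI) (simp_all add: Let_def algebra_simps)
  have "\<not> leibniz (shape_alg ?P)" by (rule not_leibniz_shape_change[OF new _ _ _ assms]) simp_all
  have "M_class (shape_alg ?P)"
  proof (cases "D = 0")
    case True
    then show ?thesis using M_class_e11 \<open>\<not> leibniz (shape_alg ?P)\<close> by simp
  next
    case False
    define q where "q = csqrt D"
    have "q \<noteq> 0" "q^2 = D" using False unfolding q_def by simp_all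
    let ?Q' = "shape_change ?P 1 0 0 (1/q) 0 0 1 0 1"
    have new': "?Q' = Shape 1 0 0 1 (sb11 ?Q') (sb12 ?Q') (sb21 ?Q') (sb22 ?Q') 0 0 (sd1 ?Q') (sd2 ?Q') 0"
      by (rule Shape_eqI)
        (simp_all add: Let_def field_simps power2_eq_square \<open>q \<noteq> 0\<close> \<open>q^2 = D\<close>[symmetric])
    show ?thesis
      using M_class_shape_change[OF new'] M_class_identity
        not_leibniz_shape_change[OF new' _ _ _ \<open>\<not> leibniz (shape_alg ?P)\<close>] \<open>q \<noteq> 0\<close> by simp
  qed
  then show ?thesis by (rule M_class_shape_change[OF new, rotated 3]) simp_all
qed

lemma M_class_a11_nonzero:
  assumes "\<not> leibniz (shape_alg (Shape a11 a12 a21 a22 b11 b12 b21 b22 0 0 d1 d2 0))" "a11 \<noteq> 0"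
  shows "M_class (shape_alg (Shape a11 a12 a21 a22 b11 b12 b21 b22 0 0 d1 d2 0))"
proof -
  let ?P = "Shape 1 (a12/a11) (a21/a11) (a22/a11) b11 b12 b21 b22 0 0 (a11*d1) (a11*d2) 0"
  have new: "shape_change (Shape a11 a12 a21 a22 b11 b12 b21 b22 0 0 d1 d2 0) 1 0 0 1 0 0 a11 0 1 = ?P"
    using assms(2) by (simp add: Let_def field_simps)
  have "\<not> leibniz (shape_alg ?P)" by (rule not_leibniz_shape_change[OF new _ assms(2) _ assms(1)]) simp_all
  then have "M_class (shape_alg ?P)"
    using M_class_a11_1_symmetric M_class_a11_1_nonsymmetric by (cases "a12/a11 = a21/a11") metis+
  then show ?thesis by (rule M_class_shape_change[OF new _ assms(2), rotated 2]) simp_all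
qed

lemma M_class_symmetric_part_nonzero:
  assumes "\<not> leibniz (shape_alg (Shape a11 a12 a21 a22 b11 b12 b21 b22 0 0 d1 d2 0))"
    and "a11 \<noteq> 0 \<or> a12 + a21 \<noteq> 0 \<or> a22 \<noteq> 0"
  shows "M_class (shape_alg (Shape a11 a12 a21 a22 b11 b12 b21 b22 0 0 d1 d2 0))"
proof -
  consider "a11 \<noteq> 0" | "a11 = 0" "a22 \<noteq> 0" | "a11 = 0" "a22 = 0" "a12 + a21 \<noteq> 0"
    using assms(2) by blast
  then show ?thesis
  proof cases
    case 1
    then show ?thesis using M_class_a11_nonzero assms(1) by blast
  next
    case 2
    let ?Q = "shape_change (Shape a11 a12 a21 a22 b11 b12 b21 b22 0 0 d1 d2 0) 0 1 1 0 0 0 1 0 1"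
    have new: "?Q = Shape a22 a21 a12 a11 b22 b21 b12 b11 0 0 d2 d1 0" by (simp add: Let_def)
    show ?thesis
      using M_class_shape_change[OF new] not_leibniz_shape_change[OF new _ _ _ assms(1)]
        M_class_a11_nonzero 2 by simp
  next
    case 3
    let ?Q = "shape_change (Shape a11 a12 a21 a22 b11 b12 b21 b22 0 0 d1 d2 0) 1 0 1 1 0 0 1 0 1"
    have new: "?Q = Shape (sa11 ?Q) (sa12 ?Q) (sa21 ?Q) (sa22 ?Q) (sb11 ?Q) (sb12 ?Q) (sb21 ?Q) (sb22 ?Q)
        0 0 (sd1 ?Q) (sd2 ?Q) 0"
      by (rule Shape_eqI) (simp_all add: Let_def)
    have "sa11 ?Q \<noteq> 0" using 3 by (simp add: Let_def)
    then show ?thesis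
      using M_class_shape_change[OF new] not_leibniz_shape_change[OF new _ _ _ assms(1)]
        M_class_a11_nonzero by simp
  qed
qed

lemma M_class_family_M03_M04: "M_class (shape_alg (Shape 0 1 (-1) 0 b11 b12 b21 b22 a 0 (1-a) 0 0))"
proof (rule M_class_shape_change[of _ 1 0 0 1 "-b11" "-(b12+b21)" 1 "b12 - a*(b12+b21)" 1])
  show "shape_change (Shape 0 1 (-1) 0 b11 b12 b21 b22 a 0 (1-a) 0 0) 1 0 0 1 (-b11) (-(b12+b21)) 1
      (b12 - a*(b12+b21)) 1 = Shape 0 1 (-1) 0 0 0 0 b22 a 0 (1-a) 0 0"
    by (simp add: Let_def algebra_simps)
  show "M_class (shape_alg (Shape 0 1 (-1) 0 0 0 0 b22 a 0 (1-a) 0 0))"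
  proof (cases "b22 = 0")
    case True
    then show ?thesis using M_class_normal_forms by simp
  next
    case False
    have "shape_change (Shape 0 1 (-1) 0 0 0 0 b22 a 0 (1-a) 0 0) 1 0 0 (1/b22) 0 0 (1/b22) 0 (1/b22)
      = Shape 0 1 (-1) 0 0 0 0 1 a 0 (1-a) 0 0"
      using False by (simp add: Let_def field_simps)
    then show ?thesis by (rule M_class_shape_change) (simp_all add: False M_class_normal_forms)
  qed
qed simp_all

lemma M_class_family_M05_M06: "M_class (shape_alg (Shape 0 1 (-1) 0 b11 b12 b21 b22 0 1 1 (-1) 0))"
proof (rule M_class_shape_change[of _ 1 0 0 1 "-b11" "-(b21+b12)" 1 "b12+b11" 1])
  show "shape_change (Shape 0 1 (-1) 0 b11 b12 b21 b22 0 1 1 (-1) 0) 1 0 0 1 (-b11) (-(b21+b12)) 1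
      (b12+b11) 1 = Shape 0 1 (-1) 0 0 0 0 b22 0 1 1 (-1) 0"
    by (simp add: Let_def algebra_simps)
  show "M_class (shape_alg (Shape 0 1 (-1) 0 0 0 0 b22 0 1 1 (-1) 0))"
    using M_class_normal_forms M_class_scale_b[of b22 0 1 "-1" 0 0 0 0 b22 0 1 1 "-1"]
    by (cases "b22 = 0") simp_all
qed simp_all

lemma M_class_alternating_f_0_g1_d1:
  assumes "g1 + d1 \<noteq> 0"
  shows "M_class (shape_alg (Shape 0 1 (-1) 0 b11 b12 b21 b22 g1 g2 d1 d2 0))"
proof -
  define s1 where "s1 = g1 + d1"
  define s2 where "s2 = g2 + d2"
  define D where "D = g1 * s2 - g2 * s1"
  have "s1 \<noteq> 0" "d1 = s1 - g1" using assms unfolding s1_def by simp_all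
  \<comment> \<open>D = det(g, g + d) separates the families M03/M04 (D = 0) and M05/M06.\<close>
  show ?thesis
  proof (cases "D = 0")
    case True
    let ?Q = "shape_change (Shape 0 1 (-1) 0 b11 b12 b21 b22 g1 g2 d1 d2 0) 1 s2 0 (-s1) 0 0 (-s1) 0 (-(s1^2))"
    have new: "?Q = Shape 0 1 (-1) 0 (sb11 ?Q) (sb12 ?Q) (sb21 ?Q) (sb22 ?Q) (g1/s1) 0 (1 - g1/s1) 0 0"
      by (rule Shape_eqI; simp add: Let_def field_simps power2_eq_square \<open>s1 \<noteq> 0\<close> \<open>d1 = s1 - g1\<close>;
          use True D_def s2_def in algebra)
    show ?thesis
      by (rule M_class_shape_change[OF new]) (simp_all add: \<open>s1 \<noteq> 0\<close> M_class_family_M03_M04)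
  next
    case False
    let ?Q = "shape_change (Shape 0 1 (-1) 0 b11 b12 b21 b22 g1 g2 d1 d2 0) g2 (-s2) (-g1) s1 0 0 (-D) 0 (D^2)"
    have new: "?Q = Shape 0 1 (-1) 0 (sb11 ?Q) (sb12 ?Q) (sb21 ?Q) (sb22 ?Q) 0 1 1 (-1) 0"
      by (rule Shape_eqI; simp add: Let_def field_simps power2_eq_square False \<open>d1 = s1 - g1\<close>;
          use D_def s2_def in algebra)
    have "g2 * s1 - - s2 * - g1 \<noteq> 0" using False unfolding D_def by (simp add: algebra_simps)
    then show ?thesis
      by (rule M_class_shape_change[OF new]) (simp_all add: False M_class_family_M05_M06)
  qed
qed

lemma M_class_alternating_f_0:
  assumes "\<not> leibniz (shape_alg (Shape 0 1 (-1) 0 b11 b12 b21 b22 g1 g2 d1 d2 0))"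
  shows "M_class (shape_alg (Shape 0 1 (-1) 0 b11 b12 b21 b22 g1 g2 d1 d2 0))"
proof (cases "g1 + d1 = 0")
  case False
  then show ?thesis by (rule M_class_alternating_f_0_g1_d1)
next
  case True
  have "g2 + d2 \<noteq> 0"
  proof
    assume "g2 + d2 = 0"
    then have "d1 = -g1" "d2 = -g2" using True by (simp_all add: eq_neg_iff_add_eq_0 add.commute)
    then show False using assms leibniz_shape_alg_alternating_d_eq_neg_g by simp
  qed
  have "shape_change (Shape 0 1 (-1) 0 b11 b12 b21 b22 g1 g2 d1 d2 0) 0 1 1 0 0 0 (-1) 0 1
     = Shape 0 1 (-1) 0 b22 b21 b12 b11 (-g2) (-g1) (-d2) (-d1) 0"
    by (simp add: Let_def)
  then show ?thesis
    by (rule M_class_shape_change[OF _ _ _ _ M_class_alternating_f_0_g1_d1])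
      (use \<open>g2 + d2 \<noteq> 0\<close> in auto)
qed

lemma M_class_family_M10_M12: "M_class (shape_alg (Shape 0 1 (-1) 0 b11 b12 b21 b22 1 0 (-1) 0 1))"
proof (cases "b22 = 0")
  case False
  define p where "p = csqrt b22"
  have "p \<noteq> 0" "b22 = p^2" using False unfolding p_def by simp_all
  define r where "r = -(b12+b21)/(2*p)"
  let ?Q = "shape_change (Shape 0 1 (-1) 0 b11 b12 b21 b22 1 0 (-1) 0 1) p 0 r 1 0 0 p (p*b12 + r*p^2) (p^2)"
  have new: "?Q = Shape 0 1 (-1) 0 (sb11 ?Q) 0 0 1 1 0 (-1) 0 1"
    by (rule Shape_eqI)
      (simp_all add: Let_def field_simps power2_eq_square \<open>p \<noteq> 0\<close> \<open>b22 = p^2\<close> r_def)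
  show ?thesis
    by (rule M_class_shape_change[OF new]) (simp_all add: \<open>p \<noteq> 0\<close> M_class_normal_forms)
next
  case True
  show ?thesis
  proof (cases "b12 + b21 = 0")
    case False
    define p where "p = b12 + b21"
    have "p \<noteq> 0" "b21 = p - b12" using False unfolding p_def by simp_all
    have "shape_change (Shape 0 1 (-1) 0 b11 b12 b21 b22 1 0 (-1) 0 1) p 0 (-b11) 1 0 0 p (-p*b21) (p^2)
        = Shape 0 1 (-1) 0 0 1 0 0 1 0 (-1) 0 1"
      by (rule Shape_eqI)
        (simp_all add: Let_def field_simps power2_eq_square \<open>p \<noteq> 0\<close> \<open>b21 = p - b12\<close> True)
    then show ?thesis
      by (rule M_class_shape_change) (simp_all add: \<open>p \<noteq> 0\<close> M_class_normal_forms)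
  next
    case True2: True
    then have "b21 = - b12" by (simp add: eq_neg_iff_add_eq_0 add.commute)
    then have "shape_change (Shape 0 1 (-1) 0 b11 b12 b21 b22 1 0 (-1) 0 1) 1 0 0 1 0 0 1 b12 1
      = Shape 0 1 (-1) 0 b11 0 0 0 1 0 (-1) 0 1"
      using True by (simp add: Let_def)
    then show ?thesis by (rule M_class_shape_change) (simp_all add: M_class_normal_forms)
  qed
qed

lemma M_class_M09_type:
  assumes "b11 \<noteq> 0" "(b12 + b21)^2 = 4*b11*b22"
  shows "M_class (shape_alg (Shape 0 1 (-1) 0 b11 b12 b21 b22 0 0 0 0 1))"
proof -
  define s where "s = b12 + b21"
  have "b21 = s - b12" unfolding s_def by simp
  define y where "y = csqrt b11"
  have "y \<noteq> 0" "b11 = y^2" using assms(1) unfolding y_def by simp_all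
  have b22: "b22 = s^2 / (4*y^2)"
    using assms(2) \<open>y \<noteq> 0\<close> unfolding s_def[symmetric] \<open>b11 = y^2\<close> by (simp add: field_simps)
  define u where "u = -s/(2*y)"
  have "shape_change (Shape 0 1 (-1) 0 b11 b12 b21 b22 0 0 0 0 1) 1 u 0 y 0 0 y (-(b11*u + b21*y)) (y^2)
      = Shape 0 1 (-1) 0 1 0 0 0 0 0 0 0 1"
    by (rule Shape_eqI)
      (simp_all add: Let_def field_simps power2_eq_square \<open>y \<noteq> 0\<close> \<open>b11 = y^2\<close> b22 u_def
        \<open>b21 = s - b12\<close>)
  then show ?thesis
    by (rule M_class_shape_change) (simp_all add: \<open>y \<noteq> 0\<close> M_class_normal_forms)
qed

lemma M_class_M08_type:
  assumes "b11 \<noteq> 0" "(b12 + b21)^2 \<noteq> 4*b11*b22"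
  shows "M_class (shape_alg (Shape 0 1 (-1) 0 b11 b12 b21 b22 0 0 0 0 1))"
proof -
  define s where "s = b12 + b21"
  define sq where "sq = csqrt (s^2 - 4*b11*b22)"
  have "sq \<noteq> 0" "sq^2 = s^2 - 4*b11*b22" using assms(2) unfolding sq_def s_def by simp_all
  \<comment> \<open>u and w are the two roots of b11 t^2 + s t + b22.\<close>
  define u where "u = (-s + sq)/(2*b11)"
  define w where "w = (-s - sq)/(2*b11)"
  have sum: "b11*(u+w) = -s" and diff: "b11*(u-w) = sq"
    unfolding u_def w_def using assms(1) by (simp_all add: field_simps)
  have prod: "b11*u*w = b22"
  proof -
    have "4*b11*(b11*u*w) = (-s+sq)*(-s-sq)" unfolding u_def w_def using assms(1) by (simp add: field_simps)
    also have "\<dots> = 4*b11*b22" using \<open>sq^2 = _\<close> by (simp add: algebra_simps power2_eq_square)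
    finally show ?thesis using assms(1) by simp
  qed
  define dt where "dt = u * (- b11) - (- b11 * w) * 1"
  have "dt \<noteq> 0" using diff \<open>sq \<noteq> 0\<close> unfolding dt_def by (simp add: algebra_simps)
  define k where "k = -(b11 * (-b11*w) * u + b12 * (-b11*w) * 1 + b21 * (-b11) * u + b22 * (-b11) * 1)"
  have new: "shape_change (Shape 0 1 (-1) 0 b11 b12 b21 b22 0 0 0 0 1) u (-b11*w) 1 (-b11) 0 0 dt k (dt^2)
      = Shape 0 1 (-1) 0 0 1 0 0 0 0 0 0 1"
    by (rule Shape_eqI; simp add: Let_def field_simps power2_eq_square \<open>dt \<noteq> 0\<close>;
        use sum prod dt_def k_def s_def in algebra)
  have "w \<noteq> u" using diff \<open>sq \<noteq> 0\<close> by auto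
  show ?thesis
    by (rule M_class_shape_change[OF new _ \<open>dt \<noteq> 0\<close>])
      (simp_all add: \<open>dt \<noteq> 0\<close> assms(1) \<open>w \<noteq> u\<close> M_class_normal_forms)
qed

lemma M_class_family_M08_M09:
  assumes "b11 \<noteq> 0"
  shows "M_class (shape_alg (Shape 0 1 (-1) 0 b11 b12 b21 b22 0 0 0 0 1))"
  using M_class_M08_type M_class_M09_type assms by blast

lemma M_class_family_M07_M09: "M_class (shape_alg (Shape 0 1 (-1) 0 b11 b12 b21 b22 0 0 0 0 1))"
proof -
  consider "b11 \<noteq> 0" | "b11 = 0" "b22 \<noteq> 0" | "b11 = 0" "b22 = 0" "b12 + b21 \<noteq> 0"
    | "b11 = 0" "b22 = 0" "b21 = - b12"
    by (auto simp: eq_neg_iff_add_eq_0 add.commute)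
  then show ?thesis
  proof cases
    case 1
    then show ?thesis by (rule M_class_family_M08_M09)
  next
    case 2
    have "shape_change (Shape 0 1 (-1) 0 b11 b12 b21 b22 0 0 0 0 1) 0 1 1 0 0 0 (-1) 0 1
       = Shape 0 1 (-1) 0 b22 b21 b12 b11 0 0 0 0 1" by (simp add: Let_def)
    then show ?thesis by (rule M_class_shape_change) (simp_all add: 2 M_class_family_M08_M09)
  next
    case 3
    let ?Q = "shape_change (Shape 0 1 (-1) 0 b11 b12 b21 b22 0 0 0 0 1) 1 0 1 1 0 0 1 0 1"
    have new: "?Q = Shape 0 1 (-1) 0 (sb11 ?Q) (sb12 ?Q) (sb21 ?Q) (sb22 ?Q) 0 0 0 0 1"
      by (rule Shape_eqI) (simp_all add: Let_def)
    have "sb11 ?Q \<noteq> 0" using 3 by (simp add: Let_def)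
    then show ?thesis using M_class_shape_change[OF new _ _ _ M_class_family_M08_M09] by simp
  next
    case 4
    have "shape_change (Shape 0 1 (-1) 0 b11 b12 b21 b22 0 0 0 0 1) 1 0 0 1 0 0 1 b12 1
      = Shape 0 1 (-1) 0 0 0 0 0 0 0 0 0 1"
      using 4 by (simp add: Let_def)
    then show ?thesis by (rule M_class_shape_change) (simp_all add: M_class_normal_forms)
  qed
qed

lemma M_class_alternating_f_1_d_eq_neg_g:
  "M_class (shape_alg (Shape 0 1 (-1) 0 b11 b12 b21 b22 g1 g2 (-g1) (-g2) 1))"
proof -
  have g1_nonzero: "M_class (shape_alg (Shape 0 1 (-1) 0 b11 b12 b21 b22 g1 g2 (-g1) (-g2) 1))"
    if "g1 \<noteq> 0" for b11 b12 b21 b22 g1 g2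
  proof -
    let ?Q = "shape_change (Shape 0 1 (-1) 0 b11 b12 b21 b22 g1 g2 (-g1) (-g2) 1) 1 (-g2) 0 g1 0 0 g1 0 (g1^2)"
    have new: "?Q = Shape 0 1 (-1) 0 (sb11 ?Q) (sb12 ?Q) (sb21 ?Q) (sb22 ?Q) 1 0 (-1) 0 1"
      by (rule Shape_eqI) (simp_all add: Let_def field_simps power2_eq_square that)
    show ?thesis
      by (rule M_class_shape_change[OF new]) (simp_all add: that M_class_family_M10_M12)
  qed
  consider "g1 \<noteq> 0" | "g1 = 0" "g2 = 0" | "g1 = 0" "g2 \<noteq> 0" by blast
  then show ?thesis
  proof cases
    case 1
    then show ?thesis by (rule g1_nonzero)
  next
    case 2
    then show ?thesis using M_class_family_M07_M09 by simp
  next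
    case 3
    have "shape_change (Shape 0 1 (-1) 0 b11 b12 b21 b22 g1 g2 (-g1) (-g2) 1) 0 1 1 0 0 0 (-1) 0 1
       = Shape 0 1 (-1) 0 b22 b21 b12 b11 (-g2) 0 (- (-g2)) (-0) 1" by (simp add: Let_def 3)
    then show ?thesis by (rule M_class_shape_change[OF _ _ _ _ g1_nonzero]) (simp_all add: 3)
  qed
qed

lemma M_class_alternating_a12_1:
  assumes "\<not> leibniz (shape_alg (Shape 0 1 (-1) 0 b11 b12 b21 b22 g1 g2 d1 d2 f))"
  shows "M_class (shape_alg (Shape 0 1 (-1) 0 b11 b12 b21 b22 g1 g2 d1 d2 f))"
proof (cases "f = 0")
  case True
  then show ?thesis using M_class_alternating_f_0 assms by simp
next
  case False
  let ?Q = "shape_change (Shape 0 1 (-1) 0 b11 b12 b21 b22 g1 g2 d1 d2 f)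
    1 0 0 1 (-(g1+d1)/(2*f)) (-(g2+d2)/(2*f)) 1 0 f"
  have new: "?Q = Shape 0 1 (-1) 0 (sb11 ?Q) (sb12 ?Q) (sb21 ?Q) (sb22 ?Q) (sg1 ?Q) (sg2 ?Q)
      (- sg1 ?Q) (- sg2 ?Q) 1"
    by (rule Shape_eqI) (simp_all add: Let_def field_simps False)
  show ?thesis
    by (rule M_class_shape_change[OF new]) (simp_all add: False M_class_alternating_f_1_d_eq_neg_g)
qed

lemma M_class_alternating:
  assumes "\<not> leibniz (shape_alg (Shape 0 a12 (-a12) 0 b11 b12 b21 b22 g1 g2 d1 d2 f))"
  shows "M_class (shape_alg (Shape 0 a12 (-a12) 0 b11 b12 b21 b22 g1 g2 d1 d2 f))"
proof -
  have "a12 \<noteq> 0" using assms leibniz_shape_alg_a_0 by auto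
  let ?P = "Shape 0 1 (-1) 0 b11 b12 b21 b22 (a12*g1) (a12*g2) (a12*d1) (a12*d2) (f*a12^2)"
  have new: "shape_change (Shape 0 a12 (-a12) 0 b11 b12 b21 b22 g1 g2 d1 d2 f) 1 0 0 1 0 0 a12 0 1 = ?P"
    using \<open>a12 \<noteq> 0\<close> by (simp add: Let_def field_simps)
  have "\<not> leibniz (shape_alg ?P)"
    by (rule not_leibniz_shape_change[OF new _ \<open>a12 \<noteq> 0\<close> _ assms]) simp_all
  then show ?thesis
    by (intro M_class_shape_change[OF new _ \<open>a12 \<noteq> 0\<close>] M_class_alternating_a12_1) simp_all
qed

lemma M_class_shape_alg:
  assumes "\<not> leibniz (shape_alg P)" "\<And>x. shape_alg P x (shape_alg P x x) = 0"
  shows "M_class (shape_alg P)"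
proof (cases P)
  case (Shape a11 a12 a21 a22 b11 b12 b21 b22 g1 g2 d1 d2 f)
  show ?thesis
  proof (cases "a11 \<noteq> 0 \<or> a12 + a21 \<noteq> 0 \<or> a22 \<noteq> 0")
    case True
    then have "g1 = 0 \<and> g2 = 0 \<and> f = 0"
      using shape_alg_left_cube_zero_constraint assms(2) unfolding Shape by blast
    then show ?thesis using M_class_symmetric_part_nonzero assms(1) True unfolding Shape by simp
  next
    case False
    then have "a11 = 0" "a22 = 0" "a21 = - a12" by (auto simp: eq_neg_iff_add_eq_0 add.commute)
    then show ?thesis using M_class_alternating assms(1) unfolding Shape by simp
  qed
qed

section \<open>Classification\<close>

theorem theoremB:
  fixes L :: alg4
  assumes "cbilinear L" and "nilpotent_alg L" and "mono_leibniz L"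
  shows "binary_leibniz L
    \<or> isomorphic_alg L M01 \<or> isomorphic_alg L M02
    \<or> (\<exists>\<alpha>. isomorphic_alg L (M03 \<alpha>)) \<or> (\<exists>\<alpha>. isomorphic_alg L (M04 \<alpha>))
    \<or> isomorphic_alg L M05 \<or> isomorphic_alg L M06 \<or> isomorphic_alg L M07
    \<or> isomorphic_alg L M08 \<or> isomorphic_alg L M09
    \<or> (\<exists>\<alpha>. isomorphic_alg L (M10 \<alpha>)) \<or> isomorphic_alg L M11
    \<or> (\<exists>\<alpha>. isomorphic_alg L (M12 \<alpha>)) \<or> (\<exists>\<alpha>. isomorphic_alg L (M13 \<alpha>))
    \<or> (\<exists>\<alpha>. isomorphic_alg L (M14 \<alpha>)) \<or> (\<exists>\<alpha>. isomorphic_alg L (M15 \<alpha>))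
    \<or> (\<exists>\<alpha>. isomorphic_alg L (M16 \<alpha>))
    \<or> (\<exists>\<alpha>. \<alpha> \<noteq> 0 \<and> isomorphic_alg L (M17 \<alpha>))
    \<or> (\<exists>\<alpha>. \<alpha> \<noteq> 0 \<and> isomorphic_alg L (M18 \<alpha>))
    \<or> isomorphic_alg L M19 \<or> isomorphic_alg L M20
    \<or> isomorphic_alg L M21 \<or> isomorphic_alg L M22"
proof (cases "leibniz L")
  case True
  then have "binary_leibniz L" unfolding binary_leibniz_def leibniz_on_def by blast
  then show ?thesis by blast
next
  case False
  obtain P where iso: "isomorphic_alg (shape_alg P) L"
    using isomorphic_shape_alg_if_not_leibniz[OF assms False] by blast
  have "\<not> leibniz (shape_alg P)" using False leibniz_iso[OF iso] by blast
  moreover have "shape_alg P x (shape_alg P x x) = 0" for x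
    using left_cube_zero_iso[OF iso mono_leibniz_left_cube_zero[OF assms(3)]] .
  ultimately have "M_class (shape_alg P)" by (rule M_class_shape_alg)
  then have "M_class L" using M_class_iso isomorphic_alg_sym[OF iso] by blast
  then show ?thesis unfolding M_class_def M_algebras_def by blast
qed

end
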